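(* Let $a$ be a parameter and let $T\in\{\mathrm{I},\mathrm{II}\}$. Suppose $(\alpha,\beta)$ is an A$_2$ Bailey pair of type $T$ relative to $a$. Define \[ \alpha'_k = a^{k_1+k_2}\, q^{\frac{1}{2}(k_1^2+k_2^2+k_3^2)}\,\alpha_k \qquad (k_1\ge k_2\ge k_3,\ k_1+k_2+k_3=0), \] \[ \beta'_L = f^{(T)}_L \sum_{r_1=0}^{L_1}\sum_{r_2=0}^{L_2} \frac{a^{r_1} q^{r_1^2-r_1r_2+r_2^2}}{(q)_{L_1-r_1}(q)_{L_2-r_2}}\,\beta_{r_1,r_2} \qquad (L_1,L_2\ge 0), \] where $f^{(\mathrm{I})}_L = 1/(aq)_{L_1+L_2}$ and $f^{(\mathrm{II})}_L=1$. Then $(\alpha',\beta')$ is an A$_2$ Bailey pair of type II relative to $a$.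
   Context: For any $x$ and integer $n$, $(x)_n=(x;q)_n=(x;q)_\infty/(xq^n;q)_\infty$, i.e. $(x)_n=\prod_{j=0}^{n-1}(1-xq^j)$ for $n\ge 0$ and $(x)_n=\prod_{j=1}^{-n}(1-xq^{-j})^{-1}$ for $n<0$; in particular $1/(q)_n=0$ for $n<0$. Write $\alpha_k=\alpha_{k_1,k_2,k_3}$ for integer triples $k$ with $k_1\ge k_2\ge k_3$, $k_1+k_2+k_3=0$, and $\beta_L=\beta_{L_1,L_2}$ for integers $L_1,L_2\ge 0$. A pair of sequences $(\alpha,\beta)$ is an A$_2$ Bailey pair of type I relative to $a$ if for all $L_1,L_2\ge0$ \[ \beta_L=\sum_{\substack{k_1\ge k_2\ge k_3\\ k_1+k_2+k_3=0}}\alpha_k\sum_r \frac{q^{r_1r_{23}}}{(q)_{r_1}(q)_{r_2}(aq)_{r_3}(q)_{r_{12}}(q)_{r_{13}}(q)_{r_{23}}}, \] where the inner sum is over integers $r_1,r_2,r_3,r_{12},r_{13},r_{23}$ satisfying $r_1+r_{12}+r_{13}=L_2-k_1$, $r_2+r_{12}+r_{23}=L_2-k_2$, $r_3+r_{13}+r_{23}=L_2-k_3$, $r_1+r_2+r_3=2L_1-L_2$, $r_{12}+r_{13}+r_{23}=2L_2-L_1$. It is an A$_2$ Bailey pair of type II relative to $a$ if for all $L_1,L_2\ge 0$ \[ \beta_L=\sum_{\substack{k_1\ge k_2\ge k_3\\ k_1+k_2+k_3=0}}\alpha_k\,\frac{(aq)_{L_1+L_2}}{(aq)_{L_1+k_1}(aq)_{L_1+k_2}(q)_{L_1+k_3}(q)_{L_2-k_1}(q)_{L_2-k_2}(aq)_{L_2-k_3}}.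 \] *)

theory Defs
  imports Main "HOL-Library.Groups_Big_Fun"
begin

text \<open>With q nonzero, (q;q)_n = 0 for n < 0, so 1/(q;q)_n = 0 as in the paper.\<close>
definition qpoch :: "'a::field \<Rightarrow> 'a \<Rightarrow> int \<Rightarrow> 'a" where
  "qpoch x q n =
     (if 0 \<le> n then (\<Prod>j<nat n. (1 - x * q ^ j))
      else inverse (\<Prod>j\<in>{1..nat (- n)}. (1 - x * q powi (- int j))))"

definition A2_index :: "int \<times> int \<times> int \<Rightarrow> bool" where
  "A2_index k = (case k of (k1, k2, k3) \<Rightarrow> k2 \<le> k1 \<and> k3 \<le> k2 \<and> k1 + k2 + k3 = 0)"

definition kernel_I :: "'a::field \<Rightarrow> 'a \<Rightarrow> nat \<Rightarrow> nat \<Rightarrow> int \<times> int \<times> int \<Rightarrow> 'a" where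
  "kernel_I a q L1 L2 k = (case k of (k1, k2, k3) \<Rightarrow>
     Sum_any (\<lambda>(r1, r2, r3, r12, r13, r23).
       if r1 + r12 + r13 = int L2 - k1 \<and> r2 + r12 + r23 = int L2 - k2 \<and>
          r3 + r13 + r23 = int L2 - k3 \<and> r1 + r2 + r3 = 2 * int L1 - int L2 \<and>
          r12 + r13 + r23 = 2 * int L2 - int L1
       then q powi (r1 * r23) /
          (qpoch q q r1 * qpoch q q r2 * qpoch (a * q) q r3 *
           qpoch q q r12 * qpoch q q r13 * qpoch q q r23)
       else 0))"

definition kernel_II :: "'a::field \<Rightarrow> 'a \<Rightarrow> nat \<Rightarrow> nat \<Rightarrow> int \<times> int \<times> int \<Rightarrow> 'a" where
  "kernel_II a q L1 L2 k = (case k of (k1, k2, k3) \<Rightarrow>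
     qpoch (a * q) q (int L1 + int L2) /
       (qpoch (a * q) q (int L1 + k1) * qpoch (a * q) q (int L1 + k2) * qpoch q q (int L1 + k3) *
        qpoch q q (int L2 - k1) * qpoch q q (int L2 - k2) * qpoch (a * q) q (int L2 - k3)))"

datatype bailey_type = TypeI | TypeII

definition bailey_kernel :: "bailey_type \<Rightarrow> 'a::field \<Rightarrow> 'a \<Rightarrow> nat \<Rightarrow> nat \<Rightarrow> int \<times> int \<times> int \<Rightarrow> 'a" where
  "bailey_kernel T = (case T of TypeI \<Rightarrow> kernel_I | TypeII \<Rightarrow> kernel_II)"

text \<open>(alpha, beta) is an A2 Bailey pair of type T relative to a.
  The sum over k ranges over all admissible triples (finitely many nonzero terms).\<close>
definition A2_bailey_pair ::
  "bailey_type \<Rightarrow> 'a::field \<Rightarrow> 'a \<Rightarrow> (int \<times> int \<times> int \<Rightarrow> 'a) \<Rightarrow> (nat \<Rightarrow> nat \<Rightarrow> 'a) \<Rightarrow> bool" where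
  "A2_bailey_pair T a q \<alpha> \<beta> \<longleftrightarrow>
     (\<forall>L1 L2. \<beta> L1 L2 =
        Sum_any (\<lambda>k. if A2_index k then \<alpha> k * bailey_kernel T a q L1 L2 k else 0))"

definition bailey_f :: "bailey_type \<Rightarrow> 'a::field \<Rightarrow> 'a \<Rightarrow> nat \<Rightarrow> nat \<Rightarrow> 'a" where
  "bailey_f T a q L1 L2 =
     (case T of TypeI \<Rightarrow> 1 / qpoch (a * q) q (int L1 + int L2) | TypeII \<Rightarrow> 1)"

end

theory Submission
  imports Defs
begin

(* For a fixed admissible k both sides of the Bailey pair relation are linear in alpha_k, so the
   theorem reduces to one identity per k: summing the type T kernel at (r1, r2) against the weight
   a^r1 q^(r1^2 - r1 r2 + r2^2) / ((q)_(L1-r1) (q)_(L2-r2)) gives f^(T)_L times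
   a^(k1+k2) q^((k1^2+k2^2+k3^2)/2) times the type II kernel at (L1, L2).  In the coordinates
   i = r1 + k3, j = r2 - k1, u = k1 - k2, v = k2 - k3 this constant splits off the weight, and both
   kernels are built from reciprocal q-Pochhammer symbols.  For type II the factor
   (aq)_(i+j+u+v) / ((aq)_(i+u+v) (aq)_(j+u+v) (q)_i (q)_j) is expanded as a sum over l, after
   which the sums over i and j separate.  For type I the kernel is itself a double sum; after a shear
   of the summation variables the four sums are taken one at a time.  Every inner sum is a
   terminating q-Chu-Vandermonde summation, and in both cases a last such sum over l produces the
   type II kernel.  The summations are proved by induction on their length from the q-Pascal rule
   for 1/((q)_s (q)_(A-s)). *)

section \<open>Finite sums over the integers\<close>

lemma Sum_any_const_mult:
  fixes f :: "'b \<Rightarrow> 'a::semiring_no_zero_divisors"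
  shows "(\<Sum>x. c * f x) = c * Sum_any f"
proof (cases "c = 0 \<or> finite {x. f x \<noteq> 0}")
  case True
  then show ?thesis by (auto simp: Sum_any_right_distrib)
next
  case False
  then have "{x. c * f x \<noteq> 0} = {x. f x \<noteq> 0}" by auto
  then show ?thesis using False by simp
qed

lemma Sum_any_int_shift:
  fixes f :: "int \<Rightarrow> 'a::comm_monoid_add"
  shows "(\<Sum>x. f (x + c)) = Sum_any f"
proof -
  have "bij (\<lambda>x::int. x + c)"
    by (rule bijI) (auto simp: inj_def image_def intro: exI[of _ "_ - c"])
  then show ?thesis
    by (rule Sum_any.reindex_cong[symmetric]) (simp add: o_def)
qed

lemma Sum_any_int_shift_minus:
  fixes f :: "int \<Rightarrow> 'a::comm_monoid_add"
  shows "(\<Sum>x. f (x - c)) = Sum_any f"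
  using Sum_any_int_shift[of f "- c"] by simp

lemma Sum_any_int_reflect:
  fixes f :: "int \<Rightarrow> 'a::comm_monoid_add"
  shows "(\<Sum>x. f (c - x)) = Sum_any f"
proof -
  have "bij (\<lambda>x::int. c - x)"
    by (rule bijI) (auto simp: inj_def image_def intro: exI[of _ "c - _"])
  then show ?thesis
    by (rule Sum_any.reindex_cong[symmetric]) (simp add: o_def)
qed

lemma finite_nonzero_int_bounded:
  fixes f :: "int \<Rightarrow> 'a::zero"
  assumes "\<And>x. f x \<noteq> 0 \<Longrightarrow> lo \<le> x \<and> x \<le> hi"
  shows "finite {x. f x \<noteq> 0}"
  by (rule finite_subset[of _ "{lo..hi}"]) (use assms in auto)

lemma Sum_any_single:
  fixes f :: "'b \<Rightarrow> 'a::comm_monoid_add"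
  assumes "\<And>x. x \<noteq> c \<Longrightarrow> f x = 0"
  shows "Sum_any f = f c"
proof -
  have "f = (\<lambda>x. if x = c then f x else 0)" using assms by auto
  then show ?thesis by (metis Sum_any.delta)
qed

lemma sum_atMost_eq_Sum_any_int:
  fixes f :: "int \<Rightarrow> 'a::comm_monoid_add"
  assumes "\<And>x. f x \<noteq> 0 \<Longrightarrow> 0 \<le> x \<and> x \<le> int L"
  shows "(\<Sum>r\<le>L. f (int r)) = Sum_any f"
proof -
  have "Sum_any f = sum f {0..int L}"
    by (rule Sum_any.expand_superset) (use assms in auto)
  also have "{0..int L} = int ` {..L}"
    by (simp add: atMost_atLeast0 image_int_atLeastAtMost)
  finally show ?thesis
    by (simp add: sum.reindex)
qed

lemma sum_atMost2_eq_Sum_any_int: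
  fixes F :: "int \<Rightarrow> int \<Rightarrow> 'a::comm_monoid_add"
  assumes F: "\<And>x y. F x y \<noteq> 0 \<Longrightarrow> 0 \<le> x \<and> x \<le> int L1 \<and> 0 \<le> y \<and> y \<le> int L2"
  shows "(\<Sum>r1\<le>L1. \<Sum>r2\<le>L2. F (int r1) (int r2)) = (\<Sum>x. \<Sum>y. F x y)"
proof -
  have "(\<Sum>r2\<le>L2. F x (int r2)) = (\<Sum>y. F x y)" for x
    by (rule sum_atMost_eq_Sum_any_int) (use F in blast)
  moreover have "(\<Sum>r1\<le>L1. \<Sum>y. F (int r1) y) = (\<Sum>x. \<Sum>y. F x y)"
  proof (rule sum_atMost_eq_Sum_any_int)
    fix x
    assume "(\<Sum>y. F x y) \<noteq> 0"
    then obtain y where "F x y \<noteq> 0"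
      by (rule Sum_any.not_neutral_obtains_not_neutral)
    then show "0 \<le> x \<and> x \<le> int L1"
      using F by blast
  qed
  ultimately show ?thesis
    by simp
qed

lemma Sum_any_int_swap:
  fixes g :: "int \<Rightarrow> int \<Rightarrow> 'a::comm_monoid_add"
  assumes "\<And>x y. g x y \<noteq> 0 \<Longrightarrow> lo1 \<le> x \<and> x \<le> hi1 \<and> lo2 \<le> y \<and> y \<le> hi2"
  shows "(\<Sum>x. \<Sum>y. g x y) = (\<Sum>y. \<Sum>x. g x y)"
  by (rule Sum_any.swap[of "{lo1..hi1} \<times> {lo2..hi2}"]) (use assms in fastforce)+

lemma Sum_any_int3_rotate:
  fixes g :: "int \<Rightarrow> int \<Rightarrow> int \<Rightarrow> 'a::comm_monoid_add"
  assumes bd: "\<And>x y z. g x y z \<noteq> 0 \<Longrightarrow> \<bar>x\<bar> \<le> B \<and> \<bar>y\<bar> \<le> B \<and> \<bar>z\<bar> \<le> B"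
  shows "(\<Sum>x. \<Sum>y. \<Sum>z. g x y z) = (\<Sum>z. \<Sum>x. \<Sum>y. g x y z)"
proof -
  have "(\<Sum>y. \<Sum>z. g x y z) = (\<Sum>z. \<Sum>y. g x y z)" for x
    by (rule Sum_any_int_swap[of _ "- B" B "- B" B]) (auto simp: abs_le_iff dest!: bd)
  moreover have "(\<Sum>x. \<Sum>z. \<Sum>y. g x y z) = (\<Sum>z. \<Sum>x. \<Sum>y. g x y z)"
  proof (rule Sum_any_int_swap[of _ "- B" B "- B" B])
    fix x z
    assume "(\<Sum>y. g x y z) \<noteq> 0"
    then obtain y where "g x y z \<noteq> 0"
      by (rule Sum_any.not_neutral_obtains_not_neutral)
    then show "- B \<le> x \<and> x \<le> B \<and> - B \<le> z \<and> z \<le> B"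
      by (auto simp: abs_le_iff dest!: bd)
  qed
  ultimately show ?thesis
    by simp
qed

lemma Sum_any_int_recurrence:
  fixes F f g :: "int \<Rightarrow> 'a::field"
  assumes "finite {s. f s \<noteq> 0}" and "finite {s. g s \<noteq> 0}"
    and "\<And>s. c * F s = a * f s + b * g (s - 1)"
  shows "c * Sum_any F = a * Sum_any f + b * Sum_any g"
proof -
  have fin_shift: "finite {s. b * g (s - 1) \<noteq> 0}"
    using finite_imageI[OF assms(2), of "\<lambda>s. s + 1"]
    by (rule finite_subset[rotated]) (auto simp: image_iff intro!: exI[of _ "_ - 1"])
  have fin: "finite {s. a * f s \<noteq> 0}"
    using assms(1) by (rule finite_subset[rotated]) auto
  have "c * Sum_any F = (\<Sum>s. a * f s + b * g (s - 1))"
    by (simp add: assms(3) flip: Sum_any_const_mult)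
  also have "\<dots> = (\<Sum>s. a * f s) + (\<Sum>s. b * g (s - 1))"
    by (rule Sum_any.distrib[OF fin fin_shift])
  finally show ?thesis
    by (simp add: Sum_any_const_mult Sum_any_int_shift_minus[of g])
qed

lemma Sum_any_nested4_eq_tuple:
  fixes g :: "int \<Rightarrow> int \<Rightarrow> int \<Rightarrow> int \<Rightarrow> 'a::comm_monoid_add"
  assumes bd: "\<And>x y z t. g x y z t \<noteq> 0 \<Longrightarrow> \<bar>x\<bar> \<le> B \<and> \<bar>y\<bar> \<le> B \<and> \<bar>z\<bar> \<le> B \<and> \<bar>t\<bar> \<le> B"
  shows "(\<Sum>x. \<Sum>y. \<Sum>z. \<Sum>t. g x y z t) = (\<Sum>(x, y, z, t). g x y z t)"
proof -
  let ?I = "{-B..B}"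
  have "(\<Sum>z. \<Sum>t. g x y z t) = (\<Sum>(z, t). g x y z t)" for x y
    by (rule Sum_any.cartesian_product[of "?I \<times> ?I"]) (auto simp: abs_le_iff dest!: bd)
  moreover have "(\<Sum>y. \<Sum>(z, t). g x y z t) = (\<Sum>(y, z, t). g x y z t)" for x
    by (rule Sum_any.cartesian_product[of "?I \<times> ?I \<times> ?I"]) (auto simp: abs_le_iff dest!: bd)
  moreover have "(\<Sum>x. \<Sum>(y, z, t). g x y z t) = (\<Sum>(x, y, z, t). g x y z t)"
    by (rule Sum_any.cartesian_product[of "?I \<times> ?I \<times> ?I \<times> ?I"]) (auto simp: abs_le_iff dest!: bd)
  ultimately show ?thesis by simp
qed

lemma Sum_any_int4_shear:
  fixes g :: "int \<Rightarrow> int \<Rightarrow> int \<Rightarrow> int \<Rightarrow> 'a::comm_monoid_add"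
  assumes bd: "\<And>x y z t. g x y z t \<noteq> 0 \<Longrightarrow> \<bar>x\<bar> \<le> B \<and> \<bar>y\<bar> \<le> B \<and> \<bar>z\<bar> \<le> B \<and> \<bar>t\<bar> \<le> B"
  shows "(\<Sum>x. \<Sum>y. \<Sum>z. \<Sum>t. g x y z t) = (\<Sum>x. \<Sum>y. \<Sum>z. \<Sum>t. g (x + t) y z t)"
proof -
  have bij: "bij (\<lambda>(x::int, y::int, z::int, t::int). (x + t, y, z, t))"
    by (rule o_bij[of "\<lambda>(x, y, z, t). (x - t, y, z, t)"]) (auto simp: fun_eq_iff)
  have "(\<Sum>x. \<Sum>y. \<Sum>z. \<Sum>t. g x y z t) = (\<Sum>(x, y, z, t). g x y z t)"
    by (rule Sum_any_nested4_eq_tuple[of _ B]) (rule bd)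
  also have "\<dots> = (\<Sum>(x, y, z, t). g (x + t) y z t)"
    by (rule Sum_any.reindex_cong[OF bij]) (auto simp: fun_eq_iff)
  also have "\<dots> = (\<Sum>x. \<Sum>y. \<Sum>z. \<Sum>t. g (x + t) y z t)"
    by (rule Sum_any_nested4_eq_tuple[of _ "2 * B", symmetric]) (auto simp: abs_le_iff dest!: bd)
  finally show ?thesis .
qed

lemma Sum_any_inj_reindex:
  fixes g :: "'b \<Rightarrow> 'a::comm_monoid_add"
  assumes "inj \<phi>" and "\<And>z. g z \<noteq> 0 \<Longrightarrow> z \<in> range \<phi>"
  shows "Sum_any g = Sum_any (g \<circ> \<phi>)"
proof -
  have "{z. g z \<noteq> 0} = \<phi> ` {x. (g \<circ> \<phi>) x \<noteq> 0}"
    using assms(2) by auto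
  then have "Sum_any g = sum g (\<phi> ` {x. (g \<circ> \<phi>) x \<noteq> 0})"
    by (simp add: Sum_any.expand_set)
  also have "\<dots> = Sum_any (g \<circ> \<phi>)"
    using inj_on_subset[OF assms(1)] by (simp add: Sum_any.expand_set sum.reindex)
  finally show ?thesis .
qed

lemma sum_Sum_any_swap:
  fixes g :: "'r \<Rightarrow> 'k \<Rightarrow> 'a::comm_monoid_add"
  assumes "finite A" and "\<And>r. r \<in> A \<Longrightarrow> finite {k. g r k \<noteq> 0}"
  shows "(\<Sum>r\<in>A. Sum_any (g r)) = (\<Sum>k. \<Sum>r\<in>A. g r k)"
  using assms
proof (induction A rule: finite_induct)
  case empty
  then show ?case by simp
next
  case (insert x F)
  have "finite {k. (\<Sum>r\<in>F. g r k) \<noteq> 0}"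
    by (rule finite_subset[of _ "\<Union>r\<in>F. {k. g r k \<noteq> 0}"])
      (use insert in \<open>auto elim: sum.not_neutral_contains_not_neutral\<close>)
  then show ?case
    using insert by (simp add: Sum_any.distrib[symmetric])
qed

lemma sum_sum_Sum_any_swap:
  fixes g :: "'r \<Rightarrow> 's \<Rightarrow> 'k \<Rightarrow> 'a::comm_monoid_add"
  assumes "finite A" and "finite B" and "\<And>x y. finite {k. g x y k \<noteq> 0}"
  shows "(\<Sum>x\<in>A. \<Sum>y\<in>B. Sum_any (g x y)) = (\<Sum>k. \<Sum>x\<in>A. \<Sum>y\<in>B. g x y k)"
proof -
  have "finite {k. (\<Sum>y\<in>B. g x y k) \<noteq> 0}" for x
    by (rule finite_subset[of _ "\<Union>y\<in>B. {k. g x y k \<noteq> 0}"])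
      (use assms in \<open>auto elim: sum.not_neutral_contains_not_neutral\<close>)
  then show ?thesis
    using assms by (simp add: sum_Sum_any_swap)
qed

section \<open>q-Pochhammer symbols\<close>

locale q_generic =
  fixes q :: "'a::field"
  assumes q_nonzero: "q \<noteq> 0"
    and q_not_root_of_unity: "\<And>n::nat. n \<ge> 1 \<Longrightarrow> q ^ n \<noteq> 1"
begin

definition qpow :: "int \<Rightarrow> 'a" where
  "qpow n = q powi n"

abbreviation poch :: "'a \<Rightarrow> int \<Rightarrow> 'a" where
  "poch x n \<equiv> qpoch x q n"

text \<open>\<open>rq n = 1/(q)\<^sub>n\<close>; it vanishes for \<open>n < 0\<close>, where \<open>(q)\<^sub>n\<close> contains the factor \<open>1 - q q\<^sup>-\<^sup>1\<close>.\<close>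
definition rq :: "int \<Rightarrow> 'a" where
  "rq n = inverse (poch q n)"

lemma qpow_add: "qpow (m + n) = qpow m * qpow n"
  by (simp add: qpow_def power_int_add q_nonzero)

lemma qpow_mult_eq: "m + n = k \<Longrightarrow> qpow m * qpow n = qpow k"
  by (simp flip: qpow_add)

lemma qpow_0 [simp]: "qpow 0 = 1"
  by (simp add: qpow_def)

lemma qpow_1 [simp]: "qpow 1 = q"
  by (simp add: qpow_def)

lemma qpow_of_nat: "qpow (int n) = q ^ n"
  by (simp add: qpow_def)

lemma qpow_nonneg: "0 \<le> n \<Longrightarrow> qpow n = q ^ nat n"
  by (metis qpow_of_nat int_nat_eq)

lemma qpow_add_one: "qpow (n + 1) = qpow n * q"
  by (simp add: qpow_add)

lemma one_minus_qpow_nonzero: "0 \<le> n \<Longrightarrow> 1 - qpow (n + 1) \<noteq> 0"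
  using q_not_root_of_unity[of "nat (n + 1)"] by (simp add: qpow_nonneg)

lemma poch_nonneg: "0 \<le> k \<Longrightarrow> poch x k = (\<Prod>j<nat k. 1 - x * q ^ j)"
  by (simp add: qpoch_def)

lemma poch_0 [simp]: "poch x 0 = 1"
  by (simp add: qpoch_def)

lemma poch_zero_base: "poch 0 k = 1"
  by (simp add: qpoch_def)

lemma poch_add_one: "0 \<le> k \<Longrightarrow> poch x (k + 1) = poch x k * (1 - x * qpow k)"
  by (simp add: poch_nonneg nat_add_distrib qpow_nonneg)

lemma poch_add_one_left: "0 \<le> k \<Longrightarrow> poch x (k + 1) = (1 - x) * poch (x * q) k"
proof -
  assume k: "0 \<le> k"
  have "poch x (k + 1) = (\<Prod>j<Suc (nat k). 1 - x * q ^ j)"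
    using k by (simp add: poch_nonneg nat_add_distrib)
  also have "\<dots> = (1 - x) * (\<Prod>j<nat k. 1 - x * q * q ^ j)"
    by (subst prod.lessThan_Suc_shift) (simp add: mult.assoc)
  finally show ?thesis
    using k by (simp add: poch_nonneg)
qed

lemma poch_add:
  assumes "0 \<le> k" and "0 \<le> l"
  shows "poch x (k + l) = poch x k * poch (x * qpow k) l"
  using assms(2)
proof (induction l rule: int_ge_induct)
  case base
  then show ?case by simp
next
  case (step l)
  have "poch x (k + (l + 1)) = poch x (k + l) * (1 - x * qpow (k + l))"
    using step assms(1) by (simp add: poch_add_one flip: add.assoc)
  then show ?case
    using step by (simp add: poch_add_one qpow_add mult.assoc)
qed

lemma rq_nonneg: "0 \<le> n \<Longrightarrow> rq n = inverse (\<Prod>j<nat n. 1 - q ^ Suc j)"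
  by (simp add: rq_def poch_nonneg mult.commute[of q] power_Suc2 del: power_Suc)

lemma rq_neg: "n < 0 \<Longrightarrow> rq n = 0"
proof -
  assume "n < 0"
  then have "(\<Prod>j\<in>{1..nat (- n)}. 1 - q * q powi (- int j)) = 0"
    using q_nonzero by (intro prod_zero) (auto intro!: bexI[of _ 1] simp: power_int_minus)
  with \<open>n < 0\<close> show ?thesis
    by (simp add: rq_def qpoch_def)
qed

lemma rq_0 [simp]: "rq 0 = 1"
  by (simp add: rq_def)

lemma rq_nonzero: "0 \<le> n \<Longrightarrow> rq n \<noteq> 0"
proof -
  have "q ^ Suc j \<noteq> 1" for j
    using q_not_root_of_unity[of "Suc j"] by simp
  then show "0 \<le> n \<Longrightarrow> rq n \<noteq> 0"
    by (simp add: rq_nonneg prod_zero_iff del: power_Suc)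
qed

lemma rq_eq_0_iff: "rq n = 0 \<longleftrightarrow> n < 0"
  using rq_neg rq_nonzero by (cases "n < 0") auto

lemma rq_rec: "rq n = (1 - qpow (n + 1)) * rq (n + 1)"
proof (cases "0 \<le> n")
  case True
  then have "nat (n + 1) = Suc (nat n)" by simp
  then show ?thesis
    using True one_minus_qpow_nonzero[OF True]
    by (simp add: rq_nonneg qpow_nonneg del: power_Suc)
next
  case False
  then show ?thesis
    by (cases "n = -1") (simp_all add: rq_neg)
qed

lemma rq_rec': "rq (n - 1) = (1 - qpow n) * rq n"
  using rq_rec[of "n - 1"] by simp

lemma rq_pascal:
  "(1 - qpow (A + 1)) * (rq s * rq (A + 1 - s)) =
     rq s * rq (A - s) + qpow (A + 1 - s) * (rq (s - 1) * rq (A + 1 - s))"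
proof -
  have q1: "rq (A - s) = (1 - qpow (A + 1 - s)) * rq (A + 1 - s)"
    using rq_rec[of "A - s"] by (simp add: algebra_simps)
  have e: "qpow (A + 1 - s) * qpow s = qpow (A + 1)"
    by (simp flip: qpow_add)
  show ?thesis
    unfolding q1 rq_rec'[of s] e[symmetric] by (simp add: algebra_simps)
qed

section \<open>Terminating q-Chu--Vandermonde summations\<close>

definition vandermonde_term :: "int \<Rightarrow> int \<Rightarrow> 'a \<Rightarrow> int \<Rightarrow> 'a" where
  "vandermonde_term n d y \<alpha> =
     qpow (\<alpha> * (\<alpha> + d)) * rq \<alpha> * rq (\<alpha> + d) * rq (n - \<alpha>) * poch (y * qpow (1 - \<alpha>)) \<alpha>"

lemma vandermonde_term_support: "vandermonde_term n d y \<alpha> \<noteq> 0 \<Longrightarrow> 0 \<le> \<alpha> \<and> \<alpha> \<le> n"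
  by (auto simp: vandermonde_term_def rq_eq_0_iff)

lemma vandermonde_term_recurrence:
  "(1 - qpow (n + 1)) * vandermonde_term (n + 1) d y \<alpha> =
     vandermonde_term n d y \<alpha> + (1 - y) * qpow (n + d + 1) * vandermonde_term n (d + 1) (y / q) (\<alpha> - 1)"
proof (cases "1 \<le> \<alpha>")
  case True
  let ?P = "poch (y / q * qpow (1 - (\<alpha> - 1))) (\<alpha> - 1)"
  let ?R = "rq \<alpha> * rq (\<alpha> + d) * rq (n + 1 - \<alpha>) * poch (y * qpow (1 - \<alpha>)) \<alpha>"
  have "y / q * qpow (1 - (\<alpha> - 1)) = y * qpow (1 - \<alpha>)"
    using qpow_add_one[of "1 - \<alpha>"] by (simp add: q_nonzero)
  moreover have "y * qpow (1 - \<alpha>) * qpow (\<alpha> - 1) = y"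
    by (simp add: mult.assoc flip: qpow_add)
  ultimately have p: "poch (y * qpow (1 - \<alpha>)) \<alpha> = (1 - y) * ?P"
    using poch_add_one[of "\<alpha> - 1" "y * qpow (1 - \<alpha>)"] True by simp
  have q1: "rq (n - \<alpha>) = (1 - qpow (n + 1 - \<alpha>)) * rq (n + 1 - \<alpha>)"
    using rq_rec[of "n - \<alpha>"] by (simp add: algebra_simps)
  have r1: "vandermonde_term n d y \<alpha> = qpow (\<alpha> * (\<alpha> + d)) * (1 - qpow (n + 1 - \<alpha>)) * ?R"
    unfolding vandermonde_term_def q1 by (simp add: algebra_simps)
  have e: "qpow (n + d + 1) * qpow ((\<alpha> - 1) * (\<alpha> - 1 + (d + 1))) =
      qpow (\<alpha> * (\<alpha> + d)) * qpow (n + 1 - \<alpha>)"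
    by (simp add: algebra_simps flip: qpow_add)
  have t: "vandermonde_term n (d + 1) (y / q) (\<alpha> - 1) =
      qpow ((\<alpha> - 1) * (\<alpha> - 1 + (d + 1))) * ((1 - qpow \<alpha>) * rq \<alpha>) * rq (\<alpha> + d) *
      rq (n + 1 - \<alpha>) * ?P"
    unfolding vandermonde_term_def rq_rec'[of \<alpha>] by (simp add: algebra_simps)
  have r2: "(1 - y) * qpow (n + d + 1) * vandermonde_term n (d + 1) (y / q) (\<alpha> - 1) =
      qpow (\<alpha> * (\<alpha> + d)) * qpow (n + 1 - \<alpha>) * (1 - qpow \<alpha>) * ?R"
    by (subst e[symmetric], subst p, simp only: t mult_ac)
  have "qpow (n + 1 - \<alpha>) * qpow \<alpha> = qpow (n + 1)"
    by (simp flip: qpow_add)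
  then have "(1 - qpow (n + 1)) * vandermonde_term (n + 1) d y \<alpha> =
      qpow (\<alpha> * (\<alpha> + d)) * (1 - qpow (n + 1 - \<alpha>) * qpow \<alpha>) * ?R"
    by (simp add: vandermonde_term_def algebra_simps)
  then show ?thesis
    unfolding r1 r2 by (simp add: algebra_simps)
next
  case False
  then consider "\<alpha> < 0" | "\<alpha> = 0" by linarith
  then show ?thesis
  proof cases
    case 1
    then show ?thesis by (simp add: vandermonde_term_def rq_neg)
  next
    case 2
    then show ?thesis
      by (simp add: vandermonde_term_def rq_neg rq_rec[of "n"] algebra_simps)
  qed
qed

lemma vandermonde_term_sum:
  assumes "0 \<le> d"
  shows "Sum_any (vandermonde_term n d y) = poch (y * qpow (d + 1)) n * rq n * rq (n + d)"
proof (cases "0 \<le> n")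
  case False
  then have "vandermonde_term n d y = (\<lambda>_. 0)"
    using vandermonde_term_support by fastforce
  with False show ?thesis
    by (simp add: rq_neg)
next
  case True
  then show ?thesis
    using assms
  proof (induction n arbitrary: d y rule: int_ge_induct)
    case base
    have "Sum_any (vandermonde_term 0 d y) = vandermonde_term 0 d y 0"
      by (rule Sum_any_single) (use vandermonde_term_support in fastforce)
    then show ?case
      by (simp add: vandermonde_term_def)
  next
    case (step n)
    let ?y = "y * qpow (d + 1)"
    have "(1 - qpow (n + 1)) * Sum_any (vandermonde_term (n + 1) d y) =
        Sum_any (vandermonde_term n d y) +
        (1 - y) * qpow (n + d + 1) * Sum_any (vandermonde_term n (d + 1) (y / q))"
      using vandermonde_term_recurrence
      by (intro Sum_any_int_recurrence[where a = 1, simplified]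
          finite_nonzero_int_bounded[of _ 0 n] vandermonde_term_support)
    also have "\<dots> = poch ?y n * rq n * rq (n + d) + (1 - y) * qpow (n + d + 1) *
        (poch (y / q * qpow (d + 1 + 1)) n * rq n * rq (n + (d + 1)))"
      using step by simp
    also have "\<dots> = (1 - qpow (n + 1)) * (poch ?y (n + 1) * rq (n + 1) * rq (n + 1 + d))"
    proof -
      have y: "y / q * qpow (d + 1 + 1) = ?y"
        by (simp only: qpow_add_one) (simp add: q_nonzero)
      have "?y * qpow n = y * qpow (n + d + 1)"
        by (simp add: mult.assoc add_ac flip: qpow_add)
      then have p: "poch ?y (n + 1) = poch ?y n * (1 - y * qpow (n + d + 1))"
        using step by (simp add: poch_add_one)
      have r: "rq (n + d) = (1 - qpow (n + d + 1)) * rq (n + d + 1)"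
        by (rule rq_rec)
      show ?thesis
        unfolding y p r rq_rec[of n] by (simp add: algebra_simps)
    qed
    finally show ?case
      using one_minus_qpow_nonzero[OF step.hyps] step by (simp add: add.commute)
  qed
qed

lemma vandermonde_sum:
  "(\<Sum>\<alpha>. qpow (\<alpha> * (\<alpha> + d)) * rq \<alpha> * rq (\<alpha> + d) * rq (n - \<alpha>) * poch (c * qpow (m - \<alpha> + 1)) (\<alpha> + d))
     = poch (c * qpow (m + 1)) (n + d) * rq n * rq (n + d)"
proof (cases "0 \<le> d")
  case True
  have "qpow (\<alpha> * (\<alpha> + d)) * rq \<alpha> * rq (\<alpha> + d) * rq (n - \<alpha>) * poch (c * qpow (m - \<alpha> + 1)) (\<alpha> + d)
      = poch (c * qpow (m + 1)) d * vandermonde_term n d (c * qpow m) \<alpha>" for \<alpha>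
  proof (cases "0 \<le> \<alpha>")
    case True
    have e1: "c * qpow (m - \<alpha> + 1) * qpow \<alpha> = c * qpow (m + 1)"
      by (simp add: mult.assoc flip: qpow_add)
    have e2: "c * qpow (m - \<alpha> + 1) = c * qpow m * qpow (1 - \<alpha>)"
      by (simp add: mult.assoc flip: qpow_add) (simp add: algebra_simps)
    have "poch (c * qpow (m - \<alpha> + 1)) (\<alpha> + d) = poch (c * qpow m * qpow (1 - \<alpha>)) \<alpha> * poch (c * qpow (m + 1)) d"
      using poch_add[OF True \<open>0 \<le> d\<close>, of "c * qpow (m - \<alpha> + 1)"] unfolding e1 by (simp only: e2)
    then show ?thesis
      unfolding vandermonde_term_def by (simp only: mult_ac)
  qed (simp add: vandermonde_term_def rq_neg)
  then have "(\<Sum>\<alpha>. qpow (\<alpha> * (\<alpha> + d)) * rq \<alpha> * rq (\<alpha> + d) * rq (n - \<alpha>) * poch (c * qpow (m - \<alpha> + 1)) (\<alpha> + d))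
      = poch (c * qpow (m + 1)) d * (poch (c * qpow m * qpow (d + 1)) n * rq n * rq (n + d))"
    by (simp add: Sum_any_const_mult vandermonde_term_sum[OF True])
  also have "\<dots> = poch (c * qpow (m + 1)) (n + d) * rq n * rq (n + d)"
  proof (cases "0 \<le> n")
    case True
    have e: "c * qpow m * qpow (d + 1) = c * qpow (m + 1) * qpow d"
      by (simp add: mult.assoc add_ac flip: qpow_add)
    show ?thesis
      unfolding e add.commute[of n d] poch_add[OF \<open>0 \<le> d\<close> True] by (simp only: mult_ac)
  qed (simp add: rq_neg)
  finally show ?thesis .
next
  case False
  have "(\<Sum>\<alpha>. qpow (\<alpha> * (\<alpha> + d)) * rq \<alpha> * rq (\<alpha> + d) * rq (n - \<alpha>) * poch (c * qpow (m - \<alpha> + 1)) (\<alpha> + d))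
      = Sum_any (vandermonde_term (n + d) (- d) (c * qpow (m + d)))"
    unfolding vandermonde_term_def
    by (subst Sum_any_int_shift_minus[symmetric, of _ d]) (simp add: algebra_simps flip: qpow_add)
  also have "\<dots> = poch (c * qpow (m + d) * qpow (- d + 1)) (n + d) * rq (n + d) * rq (n + d + - d)"
    by (rule vandermonde_term_sum) (use False in simp)
  also have "c * qpow (m + d) * qpow (- d + 1) = c * qpow (m + 1)"
    by (simp add: mult.assoc flip: qpow_add)
  finally show ?thesis
    by (simp add: mult.commute)
qed

lemma q_chu_vandermonde:
  "(\<Sum>j. qpow (j * j + j * u - j * l) * rq (N - j) * rq (j + u) * rq (j - l)) = qpow (l * u) * rq (N - l) * rq (N + u)"
proof -
  have pw: "qpow ((p + l) * (p + l) + (p + l) * u - (p + l) * l) * rq (N - (p + l)) * rq (p + l + u) * rq (p + l - l)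
      = qpow (l * u) * (qpow (p * (p + (l + u))) * rq p * rq (p + (l + u)) * rq ((N - l) - p) *
          poch (0 * qpow (0 - p + 1)) (p + (l + u)))" for p
  proof -
    have "qpow ((p + l) * (p + l) + (p + l) * u - (p + l) * l) = qpow (l * u) * qpow (p * (p + (l + u)))"
      by (simp add: algebra_simps flip: qpow_add)
    then show ?thesis
      by (simp add: poch_zero_base algebra_simps)
  qed
  have "(\<Sum>j. qpow (j * j + j * u - j * l) * rq (N - j) * rq (j + u) * rq (j - l)) =
      qpow (l * u) * (\<Sum>p. qpow (p * (p + (l + u))) * rq p * rq (p + (l + u)) * rq ((N - l) - p) *
          poch (0 * qpow (0 - p + 1)) (p + (l + u)))"
    by (subst Sum_any_int_shift[symmetric, of _ l]) (simp only: pw Sum_any_const_mult)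
  also have "\<dots> = qpow (l * u) * (poch (0 * qpow (0 + 1)) ((N - l) + (l + u)) * rq (N - l) * rq ((N - l) + (l + u)))"
    by (simp only: vandermonde_sum)
  finally show ?thesis
    by (simp add: poch_zero_base mult.assoc)
qed

definition xq_factor :: "'a \<Rightarrow> int \<Rightarrow> int \<Rightarrow> 'a" where
  "xq_factor x K s = x ^ nat s * qpow (s * s) * poch (x * qpow (s + 1)) (K - s)"

lemma xq_factor_shift: "1 \<le> s \<Longrightarrow> xq_factor x (K + 1) s = x * qpow s * xq_factor (x * q) K (s - 1)"
proof -
  assume s: "1 \<le> s"
  then have "nat s = Suc (nat (s - 1))"
    by simp
  then have f1: "x ^ nat s = x * x ^ nat (s - 1)"
    by simp
  have f2: "(x * q) ^ nat (s - 1) = x ^ nat (s - 1) * qpow (s - 1)"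
    using s by (simp add: qpow_nonneg power_mult_distrib)
  have f3: "qpow (s * s) = qpow s * qpow (s - 1) * qpow ((s - 1) * (s - 1))"
    by (simp flip: qpow_add) (simp add: algebra_simps)
  have f4: "x * q * qpow (s - 1 + 1) = x * qpow (s + 1)"
    by (simp add: mult.assoc qpow_add_one)
  have f5: "K - (s - 1) = K + 1 - s"
    by simp
  show ?thesis
    unfolding xq_factor_def f1 f2 f3 f4 f5 by (simp only: mult_ac)
qed

lemma xq_factor_add_one: "s \<le> A \<Longrightarrow> xq_factor x (A + 1) s = xq_factor x A s * (1 - x * qpow (A + 1))"
proof -
  assume "s \<le> A"
  have k: "A + 1 - s = (A - s) + 1"
    by simp
  have e: "x * qpow (s + 1) * qpow (A - s) = x * qpow (A + 1)"
    using qpow_mult_eq[of "s + 1" "A - s" "A + 1"] by (simp add: mult.assoc)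
  have "0 \<le> A - s"
    using \<open>s \<le> A\<close> by simp
  show ?thesis
    unfolding xq_factor_def k poch_add_one[OF \<open>0 \<le> A - s\<close>] e by (simp only: mult_ac)
qed

lemma xq_factor_pascal_shift:
  "xq_factor x (K + 1) s * qpow (A + 1 - s) * rq (s - 1) =
     x * qpow (A + 1) * (xq_factor (x * q) K (s - 1) * rq (s - 1))"
proof (cases "1 \<le> s")
  case True
  have e: "qpow s * qpow (A + 1 - s) = qpow (A + 1)"
    by (rule qpow_mult_eq) simp
  show ?thesis
    unfolding xq_factor_shift[OF True] e[symmetric] by (simp only: mult_ac)
qed (simp add: rq_neg)

definition xq_vandermonde_term :: "int \<Rightarrow> int \<Rightarrow> 'a \<Rightarrow> int \<Rightarrow> 'a" where
  "xq_vandermonde_term A B x s = xq_factor x B s * rq s * rq (A - s) * rq (B - s)"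

lemma xq_vandermonde_term_support: "xq_vandermonde_term A B x s \<noteq> 0 \<Longrightarrow> 0 \<le> s \<and> s \<le> A \<and> s \<le> B"
  by (auto simp: xq_vandermonde_term_def rq_eq_0_iff)

lemma xq_vandermonde_term_finite: "finite {s. xq_vandermonde_term A B x s \<noteq> 0}"
  by (rule finite_nonzero_int_bounded[of _ 0 A]) (use xq_vandermonde_term_support in blast)

lemma xq_vandermonde_term_recurrence:
  "(1 - qpow (A + 1)) * xq_vandermonde_term (A + 1) (B + 1) x s =
     xq_vandermonde_term A (B + 1) x s + x * qpow (A + 1) * xq_vandermonde_term A B (x * q) (s - 1)"
proof -
  have "(1 - qpow (A + 1)) * xq_vandermonde_term (A + 1) (B + 1) x s =
      xq_factor x (B + 1) s * rq (B + 1 - s) * ((1 - qpow (A + 1)) * (rq s * rq (A + 1 - s)))"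
    by (simp add: xq_vandermonde_term_def algebra_simps)
  also have "\<dots> = xq_vandermonde_term A (B + 1) x s +
      xq_factor x (B + 1) s * qpow (A + 1 - s) * rq (s - 1) * (rq (A + 1 - s) * rq (B + 1 - s))"
    unfolding rq_pascal by (simp add: xq_vandermonde_term_def algebra_simps)
  also have "\<dots> = xq_vandermonde_term A (B + 1) x s + x * qpow (A + 1) * xq_vandermonde_term A B (x * q) (s - 1)"
    unfolding xq_factor_pascal_shift by (simp add: xq_vandermonde_term_def algebra_simps)
  finally show ?thesis .
qed

lemma xq_vandermonde_closed_form_step:
  assumes "0 \<le> B"
  shows "poch (x * qpow (A + 1)) (B + 1) * rq A * rq (B + 1) +
      x * qpow (A + 1) * (poch (x * q * qpow (A + 1)) B * rq A * rq B) =
    (1 - qpow (A + 1)) * (poch (x * qpow (A + 1 + 1)) (B + 1) * rq (A + 1) * rq (B + 1))"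
proof -
  let ?c = "x * qpow (A + 1)"
  have xq: "x * qpow (A + 1 + 1) = x * q * qpow (A + 1)"
    by (simp only: qpow_add_one mult_ac)
  have pa: "poch ?c (B + 1) = (1 - ?c) * poch (x * q * qpow (A + 1)) B"
    using poch_add_one_left[OF assms] by (simp add: mult_ac)
  have "x * q * qpow (A + 1) * qpow B = ?c * qpow (B + 1)"
    by (simp add: qpow_add_one mult_ac)
  then have pb: "poch (x * q * qpow (A + 1)) (B + 1) = poch (x * q * qpow (A + 1)) B * (1 - ?c * qpow (B + 1))"
    using poch_add_one[OF assms] by simp
  show ?thesis
    unfolding xq pa pb rq_rec[of A] rq_rec[of B] by (simp add: algebra_simps)
qed

lemma xq_vandermonde_term_sum:
  "Sum_any (xq_vandermonde_term A B x) = poch (x * qpow (A + 1)) B * rq A * rq B"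
proof (cases "0 \<le> A \<and> 0 \<le> B")
  case False
  then have "xq_vandermonde_term A B x = (\<lambda>_. 0)"
    using xq_vandermonde_term_support by fastforce
  with False show ?thesis
    by (auto simp: rq_neg)
next
  case True
  then have "0 \<le> A" and "0 \<le> B" by simp_all
  then show ?thesis
  proof (induction A arbitrary: B x rule: int_ge_induct)
    case base
    have "Sum_any (xq_vandermonde_term 0 B x) = xq_vandermonde_term 0 B x 0"
      by (rule Sum_any_single) (use xq_vandermonde_term_support in fastforce)
    then show ?case
      by (simp add: xq_vandermonde_term_def xq_factor_def)
  next
    case (step A)
    show ?case
    proof (cases "B = 0")
      case True
      have "Sum_any (xq_vandermonde_term (A + 1) 0 x) = xq_vandermonde_term (A + 1) 0 x 0"
        by (rule Sum_any_single) (use xq_vandermonde_term_support in fastforce)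
      then show ?thesis
        using True by (simp add: xq_vandermonde_term_def xq_factor_def)
    next
      case False
      obtain B' where B: "B = B' + 1" and "0 \<le> B'"
        using step.prems False by (intro that[of "B - 1"]) auto
      have "(1 - qpow (A + 1)) * Sum_any (xq_vandermonde_term (A + 1) B x) =
          Sum_any (xq_vandermonde_term A B x) + x * qpow (A + 1) * Sum_any (xq_vandermonde_term A B' (x * q))"
        unfolding B using xq_vandermonde_term_recurrence
        by (intro Sum_any_int_recurrence[where a = 1, simplified] xq_vandermonde_term_finite)
      also have "\<dots> = (1 - qpow (A + 1)) * (poch (x * qpow (A + 1 + 1)) B * rq (A + 1) * rq B)"
        using \<open>0 \<le> B'\<close> step.IH[of "B' + 1"] step.IH[OF \<open>0 \<le> B'\<close>]
        by (simp only: B xq_vandermonde_closed_form_step add_nonneg_nonneg zero_le_one)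
      finally show ?thesis
        using one_minus_qpow_nonzero[OF step.hyps] by simp
    qed
  qed
qed

definition xq_binomial_term :: "int \<Rightarrow> 'a \<Rightarrow> int \<Rightarrow> 'a" where
  "xq_binomial_term A x s = xq_factor x A s * rq s * rq (A - s)"

lemma xq_binomial_term_support: "xq_binomial_term A x s \<noteq> 0 \<Longrightarrow> 0 \<le> s \<and> s \<le> A"
  by (auto simp: xq_binomial_term_def rq_eq_0_iff)

lemma xq_binomial_term_recurrence:
  "(1 - qpow (A + 1)) * xq_binomial_term (A + 1) x s =
     (1 - x * qpow (A + 1)) * xq_binomial_term A x s + x * qpow (A + 1) * xq_binomial_term A (x * q) (s - 1)"
proof -
  have "(1 - qpow (A + 1)) * xq_binomial_term (A + 1) x s =
      xq_factor x (A + 1) s * ((1 - qpow (A + 1)) * (rq s * rq (A + 1 - s)))"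
    by (simp add: xq_binomial_term_def algebra_simps)
  also have "\<dots> = xq_factor x (A + 1) s * (rq s * rq (A - s)) +
      xq_factor x (A + 1) s * qpow (A + 1 - s) * rq (s - 1) * rq (A + 1 - s)"
    unfolding rq_pascal by (simp add: algebra_simps)
  also have "xq_factor x (A + 1) s * (rq s * rq (A - s)) = (1 - x * qpow (A + 1)) * xq_binomial_term A x s"
    by (cases "s \<le> A") (simp_all add: xq_binomial_term_def xq_factor_add_one rq_neg algebra_simps)
  also have "xq_factor x (A + 1) s * qpow (A + 1 - s) * rq (s - 1) * rq (A + 1 - s) =
      x * qpow (A + 1) * xq_binomial_term A (x * q) (s - 1)"
    unfolding xq_factor_pascal_shift by (simp add: xq_binomial_term_def algebra_simps)
  finally show ?thesis .
qed

lemma xq_binomial_term_sum: "Sum_any (xq_binomial_term A x) = rq A"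
proof (cases "0 \<le> A")
  case False
  then have "xq_binomial_term A x = (\<lambda>_. 0)"
    using xq_binomial_term_support by fastforce
  with False show ?thesis
    by (simp add: rq_neg)
next
  case True
  then show ?thesis
  proof (induction A arbitrary: x rule: int_ge_induct)
    case base
    have "Sum_any (xq_binomial_term 0 x) = xq_binomial_term 0 x 0"
      by (rule Sum_any_single) (use xq_binomial_term_support in fastforce)
    then show ?case
      by (simp add: xq_binomial_term_def xq_factor_def)
  next
    case (step A)
    let ?c = "x * qpow (A + 1)"
    have "(1 - qpow (A + 1)) * Sum_any (xq_binomial_term (A + 1) x) =
        (1 - ?c) * Sum_any (xq_binomial_term A x) + ?c * Sum_any (xq_binomial_term A (x * q))"
      using xq_binomial_term_recurrence
      by (intro Sum_any_int_recurrence finite_nonzero_int_bounded[of _ 0 A] xq_binomial_term_support)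
    also have "\<dots> = (1 - ?c) * rq A + ?c * rq A"
      by (simp only: step.IH)
    also have "\<dots> = (1 - qpow (A + 1)) * rq (A + 1)"
      by (simp add: rq_rec[of A] algebra_simps)
    finally show ?case
      using one_minus_qpow_nonzero[OF step.hyps] step by simp
  qed
qed

end

locale aq_generic = q_generic +
  fixes a :: 'a
  assumes aq_not_one: "\<And>n::nat. n \<ge> 1 \<Longrightarrow> a * q ^ n \<noteq> 1"
begin

definition raq :: "int \<Rightarrow> 'a" where
  "raq n = inverse (poch (a * q) n)"

lemma one_minus_aqpow_nonzero: "0 \<le> n \<Longrightarrow> 1 - a * qpow (n + 1) \<noteq> 0"
  using aq_not_one[of "nat (n + 1)"] by (simp add: qpow_nonneg)

lemma poch_aq_nonzero: "0 \<le> n \<Longrightarrow> poch (a * q) n \<noteq> 0"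
proof -
  have "a * q * q ^ j \<noteq> 1" for j
    using aq_not_one[of "Suc j"] by (simp add: mult.assoc)
  then show "0 \<le> n \<Longrightarrow> poch (a * q) n \<noteq> 0"
    by (simp add: poch_nonneg prod_zero_iff)
qed

lemma poch_aq_mult_raq: "0 \<le> n \<Longrightarrow> poch (a * q) n * raq n = 1"
  by (simp add: raq_def poch_aq_nonzero)

lemma raq_rec: "raq n = (1 - a * qpow (n + 1)) * raq (n + 1)"
proof (cases "0 \<le> n")
  case True
  have "poch (a * q) (n + 1) = poch (a * q) n * (1 - a * qpow (n + 1))"
    using poch_add_one[OF True, of "a * q"] by (simp add: qpow_add_one mult_ac)
  then show ?thesis
    using True one_minus_aqpow_nonzero[OF True] poch_aq_nonzero[OF True]
    by (simp add: raq_def)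
next
  case False
  define k where "k = nat (- (n + 1))"
  have k: "nat (- n) = Suc k" and k': "nat (- (n + 1)) = k"
    using False by (simp_all add: k_def)
  have nk: "- int (Suc k) = n"
    using False k by simp
  have e: "a * q * q powi (- int (Suc k)) = a * qpow (n + 1)"
    unfolding nk qpow_add_one by (simp add: qpow_def mult_ac)
  have "raq n = (\<Prod>j\<in>{1..Suc k}. 1 - a * q * q powi (- int j))"
    using False k by (simp add: raq_def qpoch_def)
  also have "\<dots> = (\<Prod>j\<in>{1..k}. 1 - a * q * q powi (- int j)) * (1 - a * q * q powi (- int (Suc k)))"
    by simp
  also have "(\<Prod>j\<in>{1..k}. 1 - a * q * q powi (- int j)) = raq (n + 1)"
    using False k' by (cases "n + 1 = 0") (simp_all add: raq_def qpoch_def)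
  finally show ?thesis
    unfolding e by (simp add: mult.commute)
qed

lemma raq_poch: "0 \<le> k \<Longrightarrow> raq n = poch (a * qpow (n + 1)) k * raq (n + k)"
proof (induction k arbitrary: n rule: int_ge_induct)
  case base
  then show ?case by simp
next
  case (step k)
  have x: "a * qpow (n + 1 + 1) = a * qpow (n + 1) * q"
    by (simp only: qpow_add_one mult.assoc)
  show ?case
    unfolding raq_rec[of n] step.IH[of "n + 1"] x poch_add_one_left[OF step.hyps]
    by (simp only: mult_ac add_ac)
qed

lemma poch_eq_poch_aq_raq:
  "0 \<le> n \<Longrightarrow> 0 \<le> k \<Longrightarrow> poch (a * qpow (n + 1)) k = poch (a * q) (n + k) * raq n"
  using raq_poch[of k n] poch_aq_mult_raq[of "n + k"] by (simp add: mult_ac)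

lemma xq_factor_raq:
  assumes "0 \<le> s" and "s \<le> K"
  shows "xq_factor (a * qpow m) K s * raq (m + K) = a ^ nat s * qpow (m * s + s * s) * raq (m + s)"
proof -
  have "raq (m + s) = poch (a * qpow (m + s + 1)) (K - s) * raq (m + K)"
    using raq_poch[of "K - s" "m + s"] assms by simp
  moreover have "qpow m ^ nat s = qpow (m * s)"
  proof -
    have "qpow m ^ nat s = qpow m powi s"
      using assms(1) by (metis int_nat_eq power_int_of_nat)
    then show ?thesis
      by (simp add: qpow_def power_int_mult)
  qed
  then have "(a * qpow m) ^ nat s = a ^ nat s * qpow (m * s)"
    by (simp add: power_mult_distrib)
  moreover have "a * qpow m * qpow (s + 1) = a * qpow (m + s + 1)"
    by (simp add: mult.assoc add.assoc flip: qpow_add)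
  ultimately show ?thesis
    by (simp add: xq_factor_def qpow_add mult_ac)
qed

lemma aq_vandermonde_sum:
  "(\<Sum>s. a ^ nat s * qpow (m * s + s * s) * raq (m + s) * rq s * rq (A - s) * rq (B - s))
     = raq (m + B) * poch (a * qpow (m + A + 1)) B * rq A * rq B"
proof -
  have pw: "a ^ nat s * qpow (m * s + s * s) * raq (m + s) * rq s * rq (A - s) * rq (B - s)
      = raq (m + B) * xq_vandermonde_term A B (a * qpow m) s" for s
  proof (cases "0 \<le> s \<and> s \<le> B")
    case True
    then have x: "xq_factor (a * qpow m) B s * raq (m + B) = a ^ nat s * qpow (m * s + s * s) * raq (m + s)"
      by (intro xq_factor_raq) auto
    show ?thesis
      unfolding xq_vandermonde_term_def x[symmetric] by (simp only: mult_ac)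
  qed (auto simp: xq_vandermonde_term_def rq_neg)
  have e: "a * qpow m * qpow (A + 1) = a * qpow (m + A + 1)"
    by (simp add: mult.assoc add.assoc flip: qpow_add)
  have "(\<Sum>s. a ^ nat s * qpow (m * s + s * s) * raq (m + s) * rq s * rq (A - s) * rq (B - s))
      = raq (m + B) * Sum_any (xq_vandermonde_term A B (a * qpow m))"
    by (simp only: pw Sum_any_const_mult)
  also have "\<dots> = raq (m + B) * poch (a * qpow (m + A + 1)) B * rq A * rq B"
    unfolding xq_vandermonde_term_sum e by (simp only: mult.assoc)
  finally show ?thesis .
qed

lemma aq_binomial_sum:
  "(\<Sum>s. a ^ nat s * qpow (m * s + s * s) * raq (m + s) * rq s * rq (A - s)) = raq (m + A) * rq A"
proof -
  have "a ^ nat s * qpow (m * s + s * s) * raq (m + s) * rq s * rq (A - s)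
      = raq (m + A) * xq_binomial_term A (a * qpow m) s" for s
  proof (cases "0 \<le> s \<and> s \<le> A")
    case True
    then have x: "xq_factor (a * qpow m) A s * raq (m + A) = a ^ nat s * qpow (m * s + s * s) * raq (m + s)"
      by (intro xq_factor_raq) auto
    show ?thesis
      unfolding xq_binomial_term_def x[symmetric] by (simp only: mult_ac)
  qed (auto simp: xq_binomial_term_def rq_neg)
  then show ?thesis
    by (simp add: Sum_any_const_mult xq_binomial_term_sum)
qed

lemma weight_sum:
  assumes "0 \<le> w"
  shows "(\<Sum>l. a ^ nat l * qpow (w * l + l * l) * raq (w + l) * rq l * rq (M - l) * rq (N - l))
     = poch (a * q) (M + N + w) * raq (M + w) * raq (N + w) * rq M * rq N"
proof -
  have "(\<Sum>l. a ^ nat l * qpow (w * l + l * l) * raq (w + l) * rq l * rq (M - l) * rq (N - l))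
      = raq (w + N) * poch (a * qpow (w + M + 1)) N * rq M * rq N"
    by (rule aq_vandermonde_sum)
  also have "\<dots> = poch (a * q) (M + N + w) * raq (M + w) * raq (N + w) * rq M * rq N"
  proof (cases "0 \<le> M \<and> 0 \<le> N")
    case True
    then have "poch (a * qpow (M + w + 1)) N = poch (a * q) (M + w + N) * raq (M + w)"
      using assms by (intro poch_eq_poch_aq_raq) auto
    then show ?thesis
      by (simp add: add_ac mult_ac)
  qed (auto simp: rq_neg)
  finally show ?thesis .
qed

section \<open>The type II kernel\<close>

lemma aq_binomial_sum_shifted:
  assumes "0 \<le> l"
  shows "(\<Sum>i. a ^ nat i * qpow (i * i + i * v - i * l) * rq (M - i) * raq (i + v) * rq (i - l))
      = a ^ nat l * qpow (l * v) * raq (M + v) * rq (M - l)"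
proof -
  have pw: "a ^ nat (s + l) * qpow ((s + l) * (s + l) + (s + l) * v - (s + l) * l) * rq (M - (s + l)) *
        raq (s + l + v) * rq (s + l - l)
      = a ^ nat l * qpow (l * v) *
        (a ^ nat s * qpow ((l + v) * s + s * s) * raq ((l + v) + s) * rq s * rq ((M - l) - s))" for s
  proof (cases "0 \<le> s")
    case True
    have "a ^ nat (s + l) = a ^ nat s * a ^ nat l"
      using True assms by (simp add: nat_add_distrib power_add)
    moreover have "qpow ((s + l) * (s + l) + (s + l) * v - (s + l) * l) = qpow (l * v) * qpow ((l + v) * s + s * s)"
      by (simp add: algebra_simps flip: qpow_add)
    moreover have "M - (s + l) = M - l - s" and "s + l + v = l + v + s" and "s + l - l = s"
      by simp_all
    ultimately show ?thesis
      by (simp only: mult_ac)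
  qed (simp add: rq_neg)
  have "(\<Sum>i. a ^ nat i * qpow (i * i + i * v - i * l) * rq (M - i) * raq (i + v) * rq (i - l)) =
      a ^ nat l * qpow (l * v) *
        (\<Sum>s. a ^ nat s * qpow ((l + v) * s + s * s) * raq ((l + v) + s) * rq s * rq ((M - l) - s))"
    by (subst Sum_any_int_shift[symmetric, of _ l]) (simp only: pw Sum_any_const_mult)
  also have "\<dots> = a ^ nat l * qpow (l * v) * (raq ((l + v) + (M - l)) * rq (M - l))"
    by (simp only: aq_binomial_sum)
  also have "l + v + (M - l) = M + v"
    by simp
  finally show ?thesis
    by (simp only: mult.assoc)
qed

lemma poch_aq_raq_expansion:
  assumes "0 \<le> w"
  shows "poch (a * q) (i + j + w) * raq (i + w) * raq (j + w) * rq i * rq j =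
    (\<Sum>l. qpow ((i - l) * (j - l)) * rq (i - l) * rq (j - l) * rq l * raq (w + l))"
proof (cases "0 \<le> i \<and> 0 \<le> j")
  case False
  then have z: "(\<lambda>l. qpow ((i - l) * (j - l)) * rq (i - l) * rq (j - l) * rq l * raq (w + l)) = (\<lambda>_. 0)"
    by (auto simp: rq_eq_0_iff fun_eq_iff)
  show ?thesis
    unfolding z using False by (auto simp: rq_neg)
next
  case True
  have pw: "qpow ((i - l) * (j - l)) * rq (i - l) * rq (j - l) * rq l * raq (w + l) =
      raq (w + j) * (qpow ((i - l) * (j - l)) * rq (i - l) * rq (j - l) * rq l * poch (a * qpow (w + l + 1)) (j - l))"
    for l
  proof (cases "0 \<le> j - l")
    case True
    have "w + l + (j - l) = w + j"
      by simp
    then show ?thesis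
      unfolding raq_poch[OF True, of "w + l"] by (simp only: mult_ac)
  qed (simp add: rq_neg)
  have "(\<Sum>l. qpow ((i - l) * (j - l)) * rq (i - l) * rq (j - l) * rq l * raq (w + l)) =
      raq (w + j) * (\<Sum>\<alpha>. qpow (\<alpha> * (\<alpha> + (j - i))) * rq \<alpha> * rq (\<alpha> + (j - i)) * rq (i - \<alpha>) *
        poch (a * qpow ((w + i) - \<alpha> + 1)) (\<alpha> + (j - i)))"
    by (simp only: pw Sum_any_const_mult, subst Sum_any_int_reflect[symmetric, of _ i]) (simp add: algebra_simps)
  also have "\<dots> = raq (w + j) * (poch (a * qpow (w + i + 1)) j * rq i * rq j)"
    by (simp add: vandermonde_sum)
  also have "poch (a * qpow (w + i + 1)) j = poch (a * q) (i + j + w) * raq (i + w)"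
    using poch_eq_poch_aq_raq[of "w + i" j] True assms by (simp add: add_ac)
  finally show ?thesis
    by (simp add: mult_ac add.commute[of w])
qed

text \<open>The kernel of type II at \<open>(L\<^sub>1, L\<^sub>2)\<close> and \<open>k\<close>, in the coordinates
  \<open>i = L\<^sub>1 + k\<^sub>3\<close>, \<open>j = L\<^sub>2 - k\<^sub>1\<close>, \<open>u = k\<^sub>1 - k\<^sub>2\<close>, \<open>v = k\<^sub>2 - k\<^sub>3\<close>.\<close>
definition kerII :: "int \<Rightarrow> int \<Rightarrow> int \<Rightarrow> int \<Rightarrow> 'a" where
  "kerII i j u v = poch (a * q) (i + j + u + v) * raq (i + u + v) * raq (i + v) * rq i * rq j *
     rq (j + u) * raq (j + u + v)"

text \<open>The coefficient \<open>bailey_coeff\<close> in the same coordinates, up to a factor depending only on \<open>k\<close>.\<close>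
definition weight :: "int \<Rightarrow> int \<Rightarrow> int \<Rightarrow> int \<Rightarrow> int \<Rightarrow> int \<Rightarrow> 'a" where
  "weight M N u v i j = a ^ nat i * qpow (i * i - i * j + j * j + i * v + j * u) * rq (M - i) * rq (N - j)"

lemma typeII_inner_sum:
  "(\<Sum>i. \<Sum>j. weight M N u v i j * raq (i + v) * rq (j + u) *
      (qpow ((i - l) * (j - l)) * rq (i - l) * rq (j - l) * rq l * raq (u + v + l)))
   = raq (M + v) * rq (N + u) *
      (a ^ nat l * qpow ((u + v) * l + l * l) * raq (u + v + l) * rq l * rq (M - l) * rq (N - l))"
proof (cases "0 \<le> l")
  case True
  define f where "f i = a ^ nat i * qpow (i * i + i * v - i * l) * rq (M - i) * raq (i + v) * rq (i - l)" for i
  define g where "g j = qpow (j * j + j * u - j * l) * rq (N - j) * rq (j + u) * rq (j - l)" for j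
  let ?C = "qpow (l * l) * rq l * raq (u + v + l)"
  have "weight M N u v i j * raq (i + v) * rq (j + u) *
      (qpow ((i - l) * (j - l)) * rq (i - l) * rq (j - l) * rq l * raq (u + v + l)) = ?C * (f i * g j)" for i j
  proof -
    let ?R = "a ^ nat i * rq (M - i) * rq (N - j) * raq (i + v) * rq (j + u) * rq (i - l) * rq (j - l) * rq l *
      raq (u + v + l)"
    have "weight M N u v i j * raq (i + v) * rq (j + u) *
        (qpow ((i - l) * (j - l)) * rq (i - l) * rq (j - l) * rq l * raq (u + v + l)) =
        (qpow (i * i - i * j + j * j + i * v + j * u) * qpow ((i - l) * (j - l))) * ?R"
      unfolding weight_def by (simp only: mult_ac)
    also have "qpow (i * i - i * j + j * j + i * v + j * u) * qpow ((i - l) * (j - l)) =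
        qpow (i * i + i * v - i * l) * qpow (j * j + j * u - j * l) * qpow (l * l)"
      by (simp add: algebra_simps flip: qpow_add)
    also have "\<dots> * ?R = ?C * (f i * g j)"
      unfolding f_def g_def by (simp only: mult_ac)
    finally show ?thesis .
  qed
  then have "(\<Sum>i. \<Sum>j. weight M N u v i j * raq (i + v) * rq (j + u) *
      (qpow ((i - l) * (j - l)) * rq (i - l) * rq (j - l) * rq l * raq (u + v + l))) =
      ?C * (\<Sum>i. \<Sum>j. f i * g j)"
    by (simp only: Sum_any_const_mult)
  also have "(\<Sum>i. \<Sum>j. f i * g j) = Sum_any f * Sum_any g"
  proof (rule Sum_any_product[symmetric])
    show "finite {i. f i \<noteq> 0}"
      by (rule finite_nonzero_int_bounded[of _ l M]) (auto simp: f_def rq_eq_0_iff)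
    show "finite {j. g j \<noteq> 0}"
      by (rule finite_nonzero_int_bounded[of _ l N]) (auto simp: g_def rq_eq_0_iff)
  qed
  also have "Sum_any f = a ^ nat l * qpow (l * v) * raq (M + v) * rq (M - l)"
    unfolding f_def by (rule aq_binomial_sum_shifted[OF True])
  also have "Sum_any g = qpow (l * u) * rq (N - l) * rq (N + u)"
    unfolding g_def by (rule q_chu_vandermonde)
  also have "qpow ((u + v) * l + l * l) = qpow (l * l) * qpow (l * v) * qpow (l * u)"
    by (simp add: algebra_simps flip: qpow_add)
  ultimately show ?thesis
    by (simp only: mult_ac)
qed (simp add: rq_neg)

lemma kerII_weighted_sum:
  assumes "0 \<le> u" and "0 \<le> v"
  shows "(\<Sum>i. \<Sum>j. weight M N u v i j * kerII i j u v) = kerII M N u v"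
proof -
  define H where "H i j l = weight M N u v i j * raq (i + v) * rq (j + u) *
      (qpow ((i - l) * (j - l)) * rq (i - l) * rq (j - l) * rq l * raq (u + v + l))" for i j l
  have w: "0 \<le> u + v"
    using assms by simp
  have pw: "weight M N u v i j * kerII i j u v = (\<Sum>l. H i j l)" for i j
  proof -
    have k: "kerII i j u v = raq (i + v) * rq (j + u) *
        (poch (a * q) (i + j + (u + v)) * raq (i + (u + v)) * raq (j + (u + v)) * rq i * rq j)"
      by (simp add: kerII_def add_ac mult_ac)
    have "weight M N u v i j * kerII i j u v = weight M N u v i j * raq (i + v) * rq (j + u) *
        (\<Sum>l. qpow ((i - l) * (j - l)) * rq (i - l) * rq (j - l) * rq l * raq (u + v + l))"
      unfolding k poch_aq_raq_expansion[OF w] by (simp only: mult.assoc add.commute[of "u + v"])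
    then show ?thesis
      by (simp only: H_def Sum_any_const_mult)
  qed
  have H_support: "\<bar>i\<bar> \<le> \<bar>M\<bar> + \<bar>N\<bar> \<and> \<bar>j\<bar> \<le> \<bar>M\<bar> + \<bar>N\<bar> \<and> \<bar>l\<bar> \<le> \<bar>M\<bar> + \<bar>N\<bar>"
    if "H i j l \<noteq> 0" for i j l
  proof -
    have "l \<le> i" "i \<le> M" "0 \<le> l" "l \<le> j" "j \<le> N"
      using that by (auto simp: H_def weight_def rq_eq_0_iff)
    then show ?thesis
      unfolding abs_le_iff by linarith
  qed
  have "(\<Sum>i. \<Sum>j. weight M N u v i j * kerII i j u v) = (\<Sum>i. \<Sum>j. \<Sum>l. H i j l)"
    by (simp only: pw)
  also have "\<dots> = (\<Sum>l. \<Sum>i. \<Sum>j. H i j l)"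
    by (rule Sum_any_int3_rotate) (rule H_support)
  also have "\<dots> = raq (M + v) * rq (N + u) *
      (\<Sum>l. a ^ nat l * qpow ((u + v) * l + l * l) * raq (u + v + l) * rq l * rq (M - l) * rq (N - l))"
    by (simp only: H_def typeII_inner_sum Sum_any_const_mult)
  also have "\<dots> = kerII M N u v"
    unfolding weight_sum[OF w] kerII_def by (simp only: add_ac mult_ac)
  finally show ?thesis .
qed

section \<open>The type I kernel\<close>

text \<open>The kernel of type I in the coordinates of \<open>kerII\<close>; the summation variables \<open>\<alpha>, s\<close> are the
  paper's \<open>r\<^sub>1, r\<^sub>2\<close>, which determine the other four.\<close>
definition kerI_term :: "int \<Rightarrow> int \<Rightarrow> int \<Rightarrow> int \<Rightarrow> int \<Rightarrow> int \<Rightarrow> 'a" where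
  "kerI_term u v i j \<alpha> s = qpow (\<alpha> * (j + u - i + \<alpha>)) * rq \<alpha> * rq s * raq (2 * i - j - \<alpha> - s + v) *
     rq (i - \<alpha> - s) * rq (j - i + s) * rq (j + u - i + \<alpha>)"

definition kerI :: "int \<Rightarrow> int \<Rightarrow> int \<Rightarrow> int \<Rightarrow> 'a" where
  "kerI i j u v = (\<Sum>\<alpha>. \<Sum>s. kerI_term u v i j \<alpha> s)"

lemma kerI_term_support:
  "kerI_term u v i j \<alpha> s \<noteq> 0 \<Longrightarrow> 0 \<le> \<alpha> \<and> 0 \<le> s \<and> \<alpha> + s \<le> i \<and> i \<le> j + s"
  by (auto simp: kerI_term_def rq_eq_0_iff)

lemma typeI_sum_s:
  "(\<Sum>s. weight M N u v (i + s) j * kerI_term u v (i + s) j \<alpha> s) =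
     a ^ nat i * qpow (i * i - i * j + j * j + i * v + j * u + \<alpha> * (j + u - i + \<alpha>)) *
       rq (N - j) * rq \<alpha> * rq (i - \<alpha>) * rq (j - i) *
     (raq (i + u + v) * poch (a * qpow (M + i - j - \<alpha> + v + 1)) (j + u - i + \<alpha>) * rq (M - i) *
       rq (j + u - i + \<alpha>))"
proof -
  let ?m = "2 * i - j - \<alpha> + v"
  let ?P = "a ^ nat i * qpow (i * i - i * j + j * j + i * v + j * u + \<alpha> * (j + u - i + \<alpha>)) *
    rq (N - j) * rq \<alpha> * rq (i - \<alpha>) * rq (j - i)"
  have pw: "weight M N u v (i + s) j * kerI_term u v (i + s) j \<alpha> s =
      ?P * (a ^ nat s * qpow (?m * s + s * s) * raq (?m + s) * rq s * rq ((M - i) - s) *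
        rq ((j + u - i + \<alpha>) - s))" for s
  proof (cases "0 \<le> s \<and> 0 \<le> \<alpha> \<and> \<alpha> \<le> i")
    case True
    let ?R = "a ^ nat i * a ^ nat s * rq (M - i - s) * rq (N - j) * rq \<alpha> * rq s * raq (?m + s) * rq (i - \<alpha>) *
      rq (j - i) * rq (j + u - i + \<alpha> - s)"
    have "a ^ nat (i + s) = a ^ nat i * a ^ nat s"
      using True by (simp add: nat_add_distrib power_add)
    moreover have "2 * (i + s) - j - \<alpha> - s + v = ?m + s" and "i + s - \<alpha> - s = i - \<alpha>"
      and "j - (i + s) + s = j - i" and "j + u - (i + s) + \<alpha> = j + u - i + \<alpha> - s"
      and "M - (i + s) = M - i - s"
      by simp_all
    ultimately have "weight M N u v (i + s) j * kerI_term u v (i + s) j \<alpha> s =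
        qpow ((i + s) * (i + s) - (i + s) * j + j * j + (i + s) * v + j * u) *
        qpow (\<alpha> * (j + u - i + \<alpha> - s)) * ?R"
      unfolding weight_def kerI_term_def by (simp only: mult_ac)
    also have "qpow ((i + s) * (i + s) - (i + s) * j + j * j + (i + s) * v + j * u) *
        qpow (\<alpha> * (j + u - i + \<alpha> - s)) =
        qpow (i * i - i * j + j * j + i * v + j * u + \<alpha> * (j + u - i + \<alpha>)) * qpow (?m * s + s * s)"
      by (simp add: algebra_simps flip: qpow_add)
    finally show ?thesis
      by (simp only: mult_ac)
  next
    case False
    then show ?thesis
      by (auto simp: weight_def kerI_term_def rq_neg)
  qed
  have "(\<Sum>s. weight M N u v (i + s) j * kerI_term u v (i + s) j \<alpha> s) =
      ?P * (raq (?m + (j + u - i + \<alpha>)) * poch (a * qpow (?m + (M - i) + 1)) (j + u - i + \<alpha>) *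
        rq (M - i) * rq (j + u - i + \<alpha>))"
    by (simp only: pw Sum_any_const_mult aq_vandermonde_sum)
  also have "?m + (j + u - i + \<alpha>) = i + u + v"
    by simp
  also have "?m + (M - i) + 1 = M + i - j - \<alpha> + v + 1"
    by simp
  finally show ?thesis .
qed

lemma typeI_sum_alpha:
  "(\<Sum>\<alpha>. a ^ nat i * qpow (i * i - i * j + j * j + i * v + j * u + \<alpha> * (j + u - i + \<alpha>)) *
       rq (N - j) * rq \<alpha> * rq (i - \<alpha>) * rq (j - i) *
     (raq (i + u + v) * poch (a * qpow (M + i - j - \<alpha> + v + 1)) (j + u - i + \<alpha>) * rq (M - i) *
       rq (j + u - i + \<alpha>))) =
   a ^ nat i * qpow (i * i - i * j + j * j + i * v + j * u) * rq (N - j) * rq (j - i) * raq (i + u + v) *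
     rq (M - i) * (poch (a * qpow (M + i - j + v + 1)) (j + u) * rq i * rq (j + u))"
proof -
  let ?P = "a ^ nat i * qpow (i * i - i * j + j * j + i * v + j * u) * rq (N - j) * rq (j - i) *
    raq (i + u + v) * rq (M - i)"
  have pw: "a ^ nat i * qpow (i * i - i * j + j * j + i * v + j * u + \<alpha> * (j + u - i + \<alpha>)) *
       rq (N - j) * rq \<alpha> * rq (i - \<alpha>) * rq (j - i) *
     (raq (i + u + v) * poch (a * qpow (M + i - j - \<alpha> + v + 1)) (j + u - i + \<alpha>) * rq (M - i) *
       rq (j + u - i + \<alpha>)) =
     ?P * (qpow (\<alpha> * (\<alpha> + (j + u - i))) * rq \<alpha> * rq (\<alpha> + (j + u - i)) * rq (i - \<alpha>) *
       poch (a * qpow ((M + i - j + v) - \<alpha> + 1)) (\<alpha> + (j + u - i)))" for \<alpha>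
  proof -
    have "qpow (i * i - i * j + j * j + i * v + j * u + \<alpha> * (j + u - i + \<alpha>)) =
        qpow (i * i - i * j + j * j + i * v + j * u) * qpow (\<alpha> * (\<alpha> + (j + u - i)))"
      by (simp add: algebra_simps flip: qpow_add)
    moreover have "M + i - j - \<alpha> + v + 1 = (M + i - j + v) - \<alpha> + 1" and "j + u - i + \<alpha> = \<alpha> + (j + u - i)"
      by simp_all
    ultimately show ?thesis
      by (simp only: mult_ac)
  qed
  have "(\<Sum>\<alpha>. a ^ nat i * qpow (i * i - i * j + j * j + i * v + j * u + \<alpha> * (j + u - i + \<alpha>)) *
       rq (N - j) * rq \<alpha> * rq (i - \<alpha>) * rq (j - i) *
     (raq (i + u + v) * poch (a * qpow (M + i - j - \<alpha> + v + 1)) (j + u - i + \<alpha>) * rq (M - i) *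
       rq (j + u - i + \<alpha>))) =
      ?P * (poch (a * qpow ((M + i - j + v) + 1)) (i + (j + u - i)) * rq i * rq (i + (j + u - i)))"
    by (simp only: pw Sum_any_const_mult vandermonde_sum)
  also have "i + (j + u - i) = j + u"
    by simp
  finally show ?thesis .
qed

lemma typeI_sum_j:
  "(\<Sum>j. a ^ nat i * qpow (i * i - i * j + j * j + i * v + j * u) * rq (N - j) * rq (j - i) * raq (i + u + v) *
       rq (M - i) * (poch (a * qpow (M + i - j + v + 1)) (j + u) * rq i * rq (j + u))) =
   a ^ nat i * qpow ((u + v) * i + i * i) * raq (u + v + i) * rq i * rq (M - i) *
     (poch (a * qpow (M + v + 1)) (N + u) * rq (N - i) * rq (N + u))"
proof -
  let ?P = "a ^ nat i * qpow ((u + v) * i + i * i) * raq (u + v + i) * rq i * rq (M - i)"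
  have pw: "a ^ nat i * qpow (i * i - i * (p + i) + (p + i) * (p + i) + i * v + (p + i) * u) * rq (N - (p + i)) *
       rq (p + i - i) * raq (i + u + v) * rq (M - i) *
       (poch (a * qpow (M + i - (p + i) + v + 1)) (p + i + u) * rq i * rq (p + i + u)) =
     ?P * (qpow (p * (p + (i + u))) * rq p * rq (p + (i + u)) * rq ((N - i) - p) *
       poch (a * qpow ((M + v) - p + 1)) (p + (i + u)))" for p
  proof -
    have "qpow (i * i - i * (p + i) + (p + i) * (p + i) + i * v + (p + i) * u) =
        qpow ((u + v) * i + i * i) * qpow (p * (p + (i + u)))"
      by (simp add: algebra_simps flip: qpow_add)
    moreover have "M + i - (p + i) + v + 1 = (M + v) - p + 1" and "p + i + u = p + (i + u)"
      and "N - (p + i) = (N - i) - p" and "p + i - i = p" and "i + u + v = u + v + i"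
      by simp_all
    ultimately show ?thesis
      by (simp only: mult_ac)
  qed
  have "(\<Sum>j. a ^ nat i * qpow (i * i - i * j + j * j + i * v + j * u) * rq (N - j) * rq (j - i) *
       raq (i + u + v) * rq (M - i) * (poch (a * qpow (M + i - j + v + 1)) (j + u) * rq i * rq (j + u))) =
      ?P * (poch (a * qpow ((M + v) + 1)) ((N - i) + (i + u)) * rq (N - i) * rq ((N - i) + (i + u)))"
    by (subst Sum_any_int_shift[symmetric, of _ i]) (simp only: pw Sum_any_const_mult vandermonde_sum)
  also have "(N - i) + (i + u) = N + u"
    by simp
  finally show ?thesis .
qed

lemma kerI_weighted_sum:
  assumes "0 \<le> u" and "0 \<le> v"
  shows "raq (M + N + u + v) * (\<Sum>i. \<Sum>j. weight M N u v i j * kerI i j u v) = kerII M N u v"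
proof -
  let ?C = "poch (a * qpow (M + v + 1)) (N + u) * rq (N + u)"
  have bound: "\<bar>i\<bar> \<le> \<bar>M\<bar> + \<bar>N\<bar> \<and> \<bar>j\<bar> \<le> \<bar>M\<bar> + \<bar>N\<bar> \<and> \<bar>\<alpha>\<bar> \<le> \<bar>M\<bar> + \<bar>N\<bar> \<and> \<bar>s\<bar> \<le> \<bar>M\<bar> + \<bar>N\<bar>"
    if "weight M N u v i j * kerI_term u v i j \<alpha> s \<noteq> 0" for i j \<alpha> s
  proof -
    have "i \<le> M" "j \<le> N" "0 \<le> \<alpha>" "0 \<le> s" "\<alpha> + s \<le> i" "i \<le> j + s"
      using that kerI_term_support[of u v i j \<alpha> s] by (auto simp: weight_def rq_eq_0_iff)
    then show ?thesis
      unfolding abs_le_iff by linarith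
  qed
  have "(\<Sum>i. \<Sum>j. weight M N u v i j * kerI i j u v) =
      (\<Sum>i. \<Sum>j. \<Sum>\<alpha>. \<Sum>s. weight M N u v i j * kerI_term u v i j \<alpha> s)"
    by (simp only: kerI_def Sum_any_const_mult)
  also have "\<dots> = (\<Sum>i. \<Sum>j. \<Sum>\<alpha>. \<Sum>s. weight M N u v (i + s) j * kerI_term u v (i + s) j \<alpha> s)"
    by (rule Sum_any_int4_shear) (rule bound)
  also have "\<dots> = (\<Sum>i. a ^ nat i * qpow ((u + v) * i + i * i) * raq (u + v + i) * rq i * rq (M - i) *
      (poch (a * qpow (M + v + 1)) (N + u) * rq (N - i) * rq (N + u)))"
    by (simp only: typeI_sum_s typeI_sum_alpha typeI_sum_j)
  also have "\<dots> = ?C * (\<Sum>i. a ^ nat i * qpow ((u + v) * i + i * i) * raq (u + v + i) * rq i * rq (M - i) *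
      rq (N - i))"
    by (simp only: Sum_any_const_mult[symmetric] mult_ac)
  also have "\<dots> = ?C * (poch (a * q) (M + N + (u + v)) * raq (M + (u + v)) * raq (N + (u + v)) * rq M * rq N)"
    using assms by (simp only: weight_sum add_nonneg_nonneg)
  finally have "raq (M + N + u + v) * (\<Sum>i. \<Sum>j. weight M N u v i j * kerI i j u v) =
      raq (M + N + u + v) * (?C * (poch (a * q) (M + N + (u + v)) * raq (M + (u + v)) * raq (N + (u + v)) *
        rq M * rq N))"
    by simp
  also have "\<dots> = kerII M N u v"
  proof (cases "0 \<le> M \<and> 0 \<le> N")
    case True
    then have "poch (a * qpow (M + v + 1)) (N + u) = poch (a * q) (M + N + u + v) * raq (M + v)"
      using poch_eq_poch_aq_raq[of "M + v" "N + u"] assms by (simp add: add_ac)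
    moreover have "raq (M + N + u + v) * poch (a * q) (M + N + u + v) = 1"
      using poch_aq_mult_raq[of "M + N + u + v"] True assms by (simp add: mult.commute)
    ultimately show ?thesis
      unfolding kerII_def by (simp add: add_ac mult_ac)
  qed (auto simp: kerII_def rq_neg)
  finally show ?thesis .
qed

end

section \<open>Transforming the Bailey pair\<close>

definition bailey_coeff :: "'a::field \<Rightarrow> 'a \<Rightarrow> nat \<Rightarrow> nat \<Rightarrow> nat \<Rightarrow> nat \<Rightarrow> 'a" where
  "bailey_coeff a q L1 L2 r1 r2 = a ^ r1 * q powi (int r1 ^ 2 - int r1 * int r2 + int r2 ^ 2) /
     (qpoch q q (int L1 - int r1) * qpoch q q (int L2 - int r2))"

context aq_generic
begin

lemma kerII_support: "kerII i j u v \<noteq> 0 \<Longrightarrow> 0 \<le> i \<and> 0 \<le> j"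
  by (auto simp: kerII_def rq_eq_0_iff)

lemma kerI_support: "kerI i j u v \<noteq> 0 \<Longrightarrow> 0 \<le> i \<and> 0 \<le> j"
proof -
  assume "kerI i j u v \<noteq> 0"
  then obtain \<alpha> where "(\<Sum>s. kerI_term u v i j \<alpha> s) \<noteq> 0"
    unfolding kerI_def by (rule Sum_any.not_neutral_obtains_not_neutral)
  then obtain s where "kerI_term u v i j \<alpha> s \<noteq> 0"
    by (rule Sum_any.not_neutral_obtains_not_neutral)
  then show ?thesis
    using kerI_term_support by force
qed

lemma kernel_II_eq_kerII:
  "kernel_II a q L1 L2 (k1, k2, k3) = kerII (int L1 + k3) (int L2 - k1) (k1 - k2) (k2 - k3)"
proof -
  have "int L1 + k3 + (int L2 - k1) + (k1 - k2) + (k2 - k3) = int L1 + int L2"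
    and "int L1 + k3 + (k1 - k2) + (k2 - k3) = int L1 + k1" and "int L1 + k3 + (k2 - k3) = int L1 + k2"
    and "int L2 - k1 + (k1 - k2) = int L2 - k2" and "int L2 - k1 + (k1 - k2) + (k2 - k3) = int L2 - k3"
    by simp_all
  then show ?thesis
    by (simp add: kernel_II_def kerII_def raq_def rq_def divide_inverse inverse_mult_distrib mult_ac)
qed

lemma kernel_I_eq_kerI:
  assumes "k1 + k2 + k3 = 0"
  shows "kernel_I a q L1 L2 (k1, k2, k3) = kerI (int L1 + k3) (int L2 - k1) (k1 - k2) (k2 - k3)"
proof -
  define i j u v where "i = int L1 + k3" and "j = int L2 - k1" and "u = k1 - k2" and "v = k2 - k3"
  define g where "g = (\<lambda>(r1, r2, r3, r12, r13, r23).
       if r1 + r12 + r13 = int L2 - k1 \<and> r2 + r12 + r23 = int L2 - k2 \<and>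
          r3 + r13 + r23 = int L2 - k3 \<and> r1 + r2 + r3 = 2 * int L1 - int L2 \<and>
          r12 + r13 + r23 = 2 * int L2 - int L1
       then q powi (r1 * r23) /
          (qpoch q q r1 * qpoch q q r2 * qpoch (a * q) q r3 *
           qpoch q q r12 * qpoch q q r13 * qpoch q q r23)
       else (0::'a))"
  define \<phi> where "\<phi> = (\<lambda>(\<alpha>::int, s::int). (\<alpha>, s, 2 * i - j - \<alpha> - s + v, i - \<alpha> - s, j - i + s, j + u - i + \<alpha>))"
  have "inj \<phi>"
    by (auto simp: \<phi>_def intro!: injI)
  moreover have "z \<in> range \<phi>" if "g z \<noteq> 0" for z
  proof -
    obtain r1 r2 r3 r12 r13 r23 where z: "z = (r1, r2, r3, r12, r13, r23)"
      by (cases z) auto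
    from that have "r1 + r12 + r13 = int L2 - k1" "r2 + r12 + r23 = int L2 - k2"
      "r1 + r2 + r3 = 2 * int L1 - int L2" "r12 + r13 + r23 = 2 * int L2 - int L1"
      by (auto simp: g_def z split: if_splits)
    then have "z = \<phi> (r1, r2)"
      using assms unfolding z \<phi>_def i_def j_def u_def v_def by (simp; linarith)
    then show ?thesis
      by blast
  qed
  ultimately have "kernel_I a q L1 L2 (k1, k2, k3) = Sum_any (g \<circ> \<phi>)"
    by (simp add: kernel_I_def g_def Sum_any_inj_reindex)
  also have "g \<circ> \<phi> = (\<lambda>(\<alpha>, s). kerI_term u v i j \<alpha> s)"
    using assms
    by (auto simp: fun_eq_iff g_def \<phi>_def kerI_term_def i_def j_def u_def v_def qpow_def raq_def rq_def
        divide_inverse inverse_mult_distrib mult_ac)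
  also have "Sum_any (\<lambda>(\<alpha>, s). kerI_term u v i j \<alpha> s) = kerI i j u v"
    unfolding kerI_def
    by (rule Sum_any.cartesian_product[symmetric, of "{0..i} \<times> {0..i}"])
      (auto dest!: kerI_term_support)
  finally show ?thesis
    by (simp add: i_def j_def u_def v_def)
qed

lemma bailey_coeff_eq:
  "bailey_coeff a q L1 L2 r1 r2 = a ^ nat (int r1) * qpow (int r1 * int r1 - int r1 * int r2 + int r2 * int r2) *
     rq (int L1 - int r1) * rq (int L2 - int r2)"
  by (simp add: bailey_coeff_def qpow_def rq_def divide_inverse power2_eq_square)

lemma bailey_coeff_shift:
  assumes "0 \<le> i" and "k3 \<le> 0" and "k1 + k2 + k3 = 0"
  shows "a ^ nat (i - k3) * qpow ((i - k3) * (i - k3) - (i - k3) * (j + k1) + (j + k1) * (j + k1)) *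
      rq (int L1 - (i - k3)) * rq (int L2 - (j + k1)) =
    a ^ nat (- k3) * qpow (k1 * k1 + k1 * k3 + k3 * k3) * weight (int L1 + k3) (int L2 - k1) (k1 - k2) (k2 - k3) i j"
proof -
  have k2: "k2 = - k1 - k3"
    using assms(3) by simp
  have "a ^ nat (i - k3) = a ^ nat i * a ^ nat (- k3)"
    using assms by (simp add: nat_add_distrib[symmetric] power_add[symmetric])
  moreover have "qpow ((i - k3) * (i - k3) - (i - k3) * (j + k1) + (j + k1) * (j + k1)) =
      qpow (k1 * k1 + k1 * k3 + k3 * k3) * qpow (i * i - i * j + j * j + i * (k2 - k3) + j * (k1 - k2))"
    unfolding k2 by (simp add: algebra_simps flip: qpow_add)
  moreover have "int L1 - (i - k3) = int L1 + k3 - i" and "int L2 - (j + k1) = int L2 - k1 - j"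
    by simp_all
  ultimately show ?thesis
    unfolding weight_def by (simp only: mult_ac)
qed

lemma bailey_constant_eq:
  assumes "k3 \<le> 0" and "k1 + k2 + k3 = 0"
  shows "a ^ nat (- k3) * qpow (k1 * k1 + k1 * k3 + k3 * k3) = a powi (k1 + k2) * q powi ((k1^2 + k2^2 + k3^2) div 2)"
proof -
  have k2: "k2 = - k1 - k3"
    using assms(2) by simp
  have "k1^2 + k2^2 + k3^2 = 2 * (k1 * k1 + k1 * k3 + k3 * k3)"
    unfolding k2 by (simp add: power2_eq_square algebra_simps)
  moreover have "a powi (k1 + k2) = a ^ nat (- k3)"
    using assms by (simp add: k2 power_int_def)
  ultimately show ?thesis
    by (simp add: qpow_def)
qed

lemma bailey_coeff_sum_shift:
  fixes k1 k2 k3 :: int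
  assumes "k2 \<le> k1" and "k3 \<le> k2" and "k1 + k2 + k3 = 0"
    and G: "\<And>i j. G i j \<noteq> 0 \<Longrightarrow> 0 \<le> i \<and> 0 \<le> j"
  shows "(\<Sum>r1\<le>L1. \<Sum>r2\<le>L2. bailey_coeff a q L1 L2 r1 r2 * G (int r1 + k3) (int r2 - k1)) =
    a powi (k1 + k2) * q powi ((k1^2 + k2^2 + k3^2) div 2) *
    (\<Sum>i. \<Sum>j. weight (int L1 + k3) (int L2 - k1) (k1 - k2) (k2 - k3) i j * G i j)"
proof -
  have "k3 \<le> 0"
    using assms(1-3) by simp
  define F where "F R1 R2 = a ^ nat R1 * qpow (R1 * R1 - R1 * R2 + R2 * R2) * rq (int L1 - R1) *
    rq (int L2 - R2) * G (R1 + k3) (R2 - k1)" for R1 R2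
  have "(\<Sum>r1\<le>L1. \<Sum>r2\<le>L2. bailey_coeff a q L1 L2 r1 r2 * G (int r1 + k3) (int r2 - k1)) =
      (\<Sum>r1\<le>L1. \<Sum>r2\<le>L2. F (int r1) (int r2))"
    by (simp add: F_def bailey_coeff_eq)
  also have "\<dots> = (\<Sum>R1. \<Sum>R2. F R1 R2)"
    by (rule sum_atMost2_eq_Sum_any_int)
      (use G assms(1-3) in \<open>force simp: F_def rq_eq_0_iff\<close>)
  also have "\<dots> = (\<Sum>i. \<Sum>R2. F (i - k3) R2)"
    by (rule Sum_any_int_shift_minus[symmetric, of "\<lambda>R1. \<Sum>R2. F R1 R2" k3])
  also have "\<dots> = (\<Sum>i. \<Sum>j. F (i - k3) (j + k1))"
    by (simp only: Sum_any_int_shift)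
  also have "\<dots> = (\<Sum>i. \<Sum>j. a ^ nat (- k3) * qpow (k1 * k1 + k1 * k3 + k3 * k3) *
      (weight (int L1 + k3) (int L2 - k1) (k1 - k2) (k2 - k3) i j * G i j))"
  proof -
    have "F (i - k3) (j + k1) = a ^ nat (- k3) * qpow (k1 * k1 + k1 * k3 + k3 * k3) *
        (weight (int L1 + k3) (int L2 - k1) (k1 - k2) (k2 - k3) i j * G i j)" for i j
    proof (cases "0 \<le> i")
      case True
      then show ?thesis
        using bailey_coeff_shift[OF True \<open>k3 \<le> 0\<close> assms(3), of j L1 L2] by (simp add: F_def mult.assoc)
    qed (use G in \<open>force simp: F_def\<close>)
    then show ?thesis
      by simp
  qed
  also have "a ^ nat (- k3) * qpow (k1 * k1 + k1 * k3 + k3 * k3) = a powi (k1 + k2) * q powi ((k1^2 + k2^2 + k3^2) div 2)"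
    by (rule bailey_constant_eq[OF \<open>k3 \<le> 0\<close> assms(3)])
  finally show ?thesis
    by (simp only: Sum_any_const_mult)
qed

lemma bailey_kernel_support:
  assumes "A2_index (k1, k2, k3)" and "bailey_kernel T a q r1 r2 (k1, k2, k3) \<noteq> 0"
  shows "0 \<le> int r1 + k3 \<and> 0 \<le> int r2 - k1"
proof (cases T)
  case TypeI
  have "k1 + k2 + k3 = 0"
    using assms(1) by (simp add: A2_index_def)
  then have "kerI (int r1 + k3) (int r2 - k1) (k1 - k2) (k2 - k3) \<noteq> 0"
    using assms(2) TypeI by (simp add: bailey_kernel_def kernel_I_eq_kerI)
  then show ?thesis
    by (rule kerI_support)
next
  case TypeII
  then have "kerII (int r1 + k3) (int r2 - k1) (k1 - k2) (k2 - k3) \<noteq> 0"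
    using assms(2) by (simp add: bailey_kernel_def kernel_II_eq_kerII)
  then show ?thesis
    by (rule kerII_support)
qed

lemma bailey_kernel_transform:
  assumes "A2_index (k1, k2, k3)"
  shows "bailey_f T a q L1 L2 *
      (\<Sum>r1\<le>L1. \<Sum>r2\<le>L2. bailey_coeff a q L1 L2 r1 r2 * bailey_kernel T a q r1 r2 (k1, k2, k3))
    = a powi (k1 + k2) * q powi ((k1^2 + k2^2 + k3^2) div 2) * kernel_II a q L1 L2 (k1, k2, k3)"
proof -
  have k: "k2 \<le> k1" "k3 \<le> k2" "k1 + k2 + k3 = 0"
    using assms by (auto simp: A2_index_def)
  then have uv: "0 \<le> k1 - k2" "0 \<le> k2 - k3"
    by simp_all
  let ?K = "a powi (k1 + k2) * q powi ((k1^2 + k2^2 + k3^2) div 2)"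
  let ?M = "int L1 + k3" and ?N = "int L2 - k1"
  show ?thesis
  proof (cases T)
    case TypeI
    have "bailey_f T a q L1 L2 = raq (?M + ?N + (k1 - k2) + (k2 - k3))"
      using TypeI by (simp add: bailey_f_def raq_def divide_inverse)
    moreover have "(\<Sum>r1\<le>L1. \<Sum>r2\<le>L2. bailey_coeff a q L1 L2 r1 r2 * bailey_kernel T a q r1 r2 (k1, k2, k3))
        = ?K * (\<Sum>i. \<Sum>j. weight ?M ?N (k1 - k2) (k2 - k3) i j * kerI i j (k1 - k2) (k2 - k3))"
      using TypeI bailey_coeff_sum_shift[OF k, where G = "\<lambda>i j. kerI i j (k1 - k2) (k2 - k3)"] kerI_support
      by (simp add: bailey_kernel_def kernel_I_eq_kerI[OF k(3)])
  ultimately show ?thesis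
      using kerI_weighted_sum[OF uv, of ?M ?N] by (simp add: kernel_II_eq_kerII mult.left_commute)
  next
    case TypeII
    have "(\<Sum>r1\<le>L1. \<Sum>r2\<le>L2. bailey_coeff a q L1 L2 r1 r2 * bailey_kernel T a q r1 r2 (k1, k2, k3))
        = ?K * (\<Sum>i. \<Sum>j. weight ?M ?N (k1 - k2) (k2 - k3) i j * kerII i j (k1 - k2) (k2 - k3))"
      using TypeII bailey_coeff_sum_shift[OF k, where G = "\<lambda>i j. kerII i j (k1 - k2) (k2 - k3)"] kerII_support
      by (simp add: bailey_kernel_def kernel_II_eq_kerII)
    then show ?thesis
      using TypeII kerII_weighted_sum[OF uv, of ?M ?N] by (simp add: bailey_f_def kernel_II_eq_kerII)
  qed
qed

lemma finite_A2_kernel_support: "finite {k. A2_index k \<and> bailey_kernel T a q r1 r2 k \<noteq> 0}"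
proof (rule finite_subset)
  show "{k. A2_index k \<and> bailey_kernel T a q r1 r2 k \<noteq> 0} \<subseteq>
      {- int r1..int r2} \<times> {- int r1..int r2} \<times> {- int r1..int r2}"
    using bailey_kernel_support by (fastforce simp: A2_index_def)
qed simp

lemma bailey_pair_term_transform:
  "bailey_f T a q L1 L2 * (\<Sum>r1\<le>L1. \<Sum>r2\<le>L2. bailey_coeff a q L1 L2 r1 r2 *
      (if A2_index k then \<alpha> k * bailey_kernel T a q r1 r2 k else 0)) =
    (if A2_index k then (case k of (k1, k2, k3) \<Rightarrow>
       a powi (k1 + k2) * q powi ((k1^2 + k2^2 + k3^2) div 2) * \<alpha> (k1, k2, k3)) * bailey_kernel TypeII a q L1 L2 k
     else 0)"
proof (cases "A2_index k")
  case True
  obtain k1 k2 k3 where k: "k = (k1, k2, k3)"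
    by (cases k)
  have "bailey_f T a q L1 L2 * (\<Sum>r1\<le>L1. \<Sum>r2\<le>L2. bailey_coeff a q L1 L2 r1 r2 *
      (if A2_index k then \<alpha> k * bailey_kernel T a q r1 r2 k else 0)) =
      \<alpha> k * (bailey_f T a q L1 L2 *
        (\<Sum>r1\<le>L1. \<Sum>r2\<le>L2. bailey_coeff a q L1 L2 r1 r2 * bailey_kernel T a q r1 r2 k))"
    using True by (simp add: sum_distrib_left mult_ac)
  also have "\<dots> = \<alpha> k * (a powi (k1 + k2) * q powi ((k1^2 + k2^2 + k3^2) div 2) * kernel_II a q L1 L2 k)"
    using True unfolding k by (simp only: bailey_kernel_transform)
  finally show ?thesis
    using True by (simp add: k bailey_kernel_def mult_ac)
qed simp

lemma A2_bailey_pair_transform: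
  assumes "A2_bailey_pair T a q \<alpha> \<beta>"
  shows "A2_bailey_pair TypeII a q
           (\<lambda>(k1, k2, k3). a powi (k1 + k2) * q powi ((k1^2 + k2^2 + k3^2) div 2) * \<alpha> (k1, k2, k3))
           (\<lambda>L1 L2. bailey_f T a q L1 L2 * (\<Sum>r1\<le>L1. \<Sum>r2\<le>L2. bailey_coeff a q L1 L2 r1 r2 * \<beta> r1 r2))"
  unfolding A2_bailey_pair_def
proof (intro allI)
  fix L1 L2
  define g where "g r1 r2 k = (if A2_index k then \<alpha> k * bailey_kernel T a q r1 r2 k else 0)" for r1 r2 k
  have fin: "finite {k. bailey_coeff a q L1 L2 r1 r2 * g r1 r2 k \<noteq> 0}" for r1 r2
    by (rule finite_subset[OF _ finite_A2_kernel_support]) (auto simp: g_def split: if_splits)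
  have "\<beta> r1 r2 = Sum_any (g r1 r2)" for r1 r2
    using assms by (simp add: A2_bailey_pair_def g_def)
  then have "(\<Sum>r1\<le>L1. \<Sum>r2\<le>L2. bailey_coeff a q L1 L2 r1 r2 * \<beta> r1 r2) =
      (\<Sum>r1\<le>L1. \<Sum>r2\<le>L2. \<Sum>k. bailey_coeff a q L1 L2 r1 r2 * g r1 r2 k)"
    by (simp only: Sum_any_const_mult)
  also have "\<dots> = (\<Sum>k. \<Sum>r1\<le>L1. \<Sum>r2\<le>L2. bailey_coeff a q L1 L2 r1 r2 * g r1 r2 k)"
    by (rule sum_sum_Sum_any_swap[OF finite_atMost finite_atMost fin])
  finally show "bailey_f T a q L1 L2 * (\<Sum>r1\<le>L1. \<Sum>r2\<le>L2. bailey_coeff a q L1 L2 r1 r2 * \<beta> r1 r2) =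
      (\<Sum>k. if A2_index k then (case k of (k1, k2, k3) \<Rightarrow>
         a powi (k1 + k2) * q powi ((k1^2 + k2^2 + k3^2) div 2) * \<alpha> (k1, k2, k3)) * bailey_kernel TypeII a q L1 L2 k
       else 0)"
    by (simp add: Sum_any_const_mult[symmetric] g_def bailey_pair_term_transform)
qed

end

theorem theorem4p3:
  fixes T :: bailey_type and a q :: "'a::field"
    and \<alpha> :: "int \<times> int \<times> int \<Rightarrow> 'a" and \<beta> :: "nat \<Rightarrow> nat \<Rightarrow> 'a"
  assumes q_nz: "q \<noteq> 0"
    and q_gen: "\<And>n::nat. n \<ge> 1 \<Longrightarrow> q ^ n \<noteq> 1"
    and a_gen: "\<And>n::nat. n \<ge> 1 \<Longrightarrow> a * q ^ n \<noteq> 1"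
    and pair: "A2_bailey_pair T a q \<alpha> \<beta>"
  shows "A2_bailey_pair TypeII a q
           (\<lambda>(k1, k2, k3). a powi (k1 + k2) * q powi ((k1^2 + k2^2 + k3^2) div 2) * \<alpha> (k1, k2, k3))
           (\<lambda>L1 L2. bailey_f T a q L1 L2 *
              (\<Sum>r1\<le>L1. \<Sum>r2\<le>L2.
                 a ^ r1 * q powi (int r1 ^ 2 - int r1 * int r2 + int r2 ^ 2) /
                   (qpoch q q (int L1 - int r1) * qpoch q q (int L2 - int r2)) * \<beta> r1 r2))"
proof -
  interpret aq_generic q a
    using q_nz q_gen a_gen by unfold_locales
  show ?thesis
    using A2_bailey_pair_transform[OF pair] by (simp only: bailey_coeff_def)
qed

end
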